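(* Let $E^{n+1}$ ($n>1$) be a real affine space, $X\subset E^{n+1}$ a smooth hypersurface, and $\Sigma=\{\sigma: q(\sigma)=1\}$ an ellipsoid, where $q(\sigma)=q(e)+Q(\sigma-e)$ with $Q$ a positive definite quadratic form, $e$ the center and $q(e)<1$. Assume that any line that meets $X$ at least twice or is tangent to $X$ does not touch $\Sigma$. Let $\Phi(x,\sigma)=\langle x-\sigma,\nabla q(\sigma)\rangle$ for $(x,\sigma)\in X\times\Sigma$ and $Z=\{(x,\sigma)\in X\times\Sigma:\Phi(x,\sigma)=0\}$. Then $\mathrm{d}_x\Phi\neq0$ on $Z$, and the map $$\mathrm{D}:Z\times\mathbb{R}_+\to T^*(X)\setminus 0,\qquad \mathrm{D}(x,\sigma,t)=(x,\,t\,\mathrm{d}_x\Phi(x,\sigma))$$ is a diffeomorphism.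
   Context: $\langle\cdot,\cdot\rangle$ denotes pairing of a vector with the covector $\nabla q(\sigma)=\mathrm{d}q(\sigma)$. $\mathrm{d}_x\Phi(x,\sigma)$ denotes the differential of $x\mapsto\Phi(x,\sigma)$ restricted to $T_xX$, i.e. an element of $T^*_xX$. $T^*(X)\setminus0$ is the cotangent bundle with the zero section removed. *)

theory Defs
  imports "HOL-Analysis.Analysis"
begin

fun dirderiv :: "('a::real_normed_vector \<Rightarrow> 'b::real_normed_vector) \<Rightarrow> 'a list \<Rightarrow> 'a \<Rightarrow> 'b" where
  "dirderiv f [] = f"
| "dirderiv f (v # vs) = (\<lambda>x. frechet_derivative (dirderiv f vs) (at x) v)"

definition smooth_on_open :: "'a::real_normed_vector set \<Rightarrow> ('a \<Rightarrow> 'b::real_normed_vector) \<Rightarrow> bool" where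
  "smooth_on_open U f \<longleftrightarrow> open U \<and> (\<forall>vs. dirderiv f vs differentiable_on U)"

definition smooth_on_set :: "'a::real_normed_vector set \<Rightarrow> ('a \<Rightarrow> 'b::real_normed_vector) \<Rightarrow> bool" where
  "smooth_on_set S f \<longleftrightarrow> (\<forall>x\<in>S. \<exists>U F. open U \<and> x \<in> U \<and> smooth_on_open U F \<and> (\<forall>y\<in>S \<inter> U. F y = f y))"

definition diffeomorphism_sets :: "'a::real_normed_vector set \<Rightarrow> 'b::real_normed_vector set \<Rightarrow> ('a \<Rightarrow> 'b) \<Rightarrow> bool" where
  "diffeomorphism_sets S T f \<longleftrightarrow> bij_betw f S T \<and> smooth_on_set S f \<and> smooth_on_set T (inv_into S f)"

definition smooth_hypersurface :: "'a::euclidean_space set \<Rightarrow> bool" where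
  "smooth_hypersurface X \<longleftrightarrow>
     (\<forall>x\<in>X. \<exists>U g. open U \<and> x \<in> U \<and> smooth_on_open U (g :: 'a \<Rightarrow> real) \<and>
        X \<inter> U = {y\<in>U. g y = 0} \<and> (\<forall>y\<in>U. frechet_derivative g (at y) \<noteq> (\<lambda>v. 0)))"

definition tangent_space :: "'a::euclidean_space set \<Rightarrow> 'a \<Rightarrow> 'a set" where
  "tangent_space X x = {v. \<exists>\<gamma> \<epsilon>. \<epsilon> > 0 \<and> (\<forall>t. \<bar>t\<bar> < \<epsilon> \<longrightarrow> \<gamma> t \<in> X) \<and> \<gamma> 0 = x \<and>
                             (\<gamma> has_vector_derivative v) (at 0)}"

(* a covector \<xi> \<in> T*_x X is represented (via the Euclidean inner product) by the unique
   w \<in> T_x X with \<xi> v = w \<bullet> v for all v \<in> T_x X *)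
definition covector_rep :: "'a::euclidean_space set \<Rightarrow> 'a \<Rightarrow> ('a \<Rightarrow> real) \<Rightarrow> 'a" where
  "covector_rep X x \<xi> = (THE w. w \<in> tangent_space X x \<and> (\<forall>v\<in>tangent_space X x. w \<bullet> v = \<xi> v))"

definition cotangent_bundle_minus_zero :: "'a::euclidean_space set \<Rightarrow> ('a \<times> 'a) set" where
  "cotangent_bundle_minus_zero X = {(x, w). x \<in> X \<and> w \<in> tangent_space X x \<and> w \<noteq> 0}"

definition quadratic_form :: "('a::real_vector \<Rightarrow> real) \<Rightarrow> bool" where
  "quadratic_form Q \<longleftrightarrow> (\<exists>B. bilinear B \<and> (\<forall>u v. B u v = B v u) \<and> (\<forall>v. Q v = B v v))"

definition pos_def :: "('a::real_vector \<Rightarrow> real) \<Rightarrow> bool" where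
  "pos_def Q \<longleftrightarrow> (\<forall>v. v \<noteq> 0 \<longrightarrow> Q v > 0)"

end

theory Submission
  imports Defs
begin

text \<open>
  Fix \<open>x \<in> X\<close> with normal \<open>n\<close> and put \<open>p = x - e\<close>, \<open>u = \<sigma> - e\<close>, so that
  \<open>q(\<sigma>) = 1\<close> reads \<open>Mu \<bullet> u = r\<^sup>2\<close> with \<open>r\<^sup>2 = 1 - q(e)\<close>. No tangent line at \<open>x\<close> touches
  \<open>\<Sigma>\<close>, and a hyperplane that misses the ellipsoid lies outside it, so \<open>p + n\<^sup>\<bottom>\<close> lies outside.
  For \<open>(x,\<sigma>) \<in> Z\<close> the tangent hyperplane of \<open>\<Sigma>\<close> at \<open>\<sigma>\<close> passes through \<open>x\<close>, and
  \<open>t d\<^sub>x\<Phi>\<close> is represented by the projection of \<open>2t Mu\<close> to \<open>n\<^sup>\<bottom>\<close>; this projection is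
  nonzero, for otherwise the point \<open>\<sigma>\<close> would lie on \<open>x + T\<^sub>xX\<close>.
  Conversely, given \<open>w \<in> T\<^sub>xX \<setminus> 0\<close>, the two linear conditions \<open>Mu \<bullet> p = r\<^sup>2\<close> and
  \<open>proj(Mu) = s w\<close> (with \<open>s = 1/2t\<close>) give \<open>u = s a + b\<close> for explicit \<open>a, b\<close>, and \<open>Mu \<bullet> u = r\<^sup>2\<close>
  becomes a quadratic equation in \<open>s\<close> with negative constant term, hence with exactly one
  positive root. This explicit inverse depends smoothly on \<open>(x, w)\<close> once \<open>n\<close> is taken to be the
  gradient of a local defining function of \<open>X\<close>, so \<open>D\<close> is a diffeomorphism.
\<close>

section \<open>Smooth functions on open sets\<close>

lemma dirderiv_append: "dirderiv f (vs @ ws) = dirderiv (dirderiv f ws) vs"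
  by (induction vs) auto

lemma frechet_derivative_cong_open:
  assumes "open U" "x \<in> U" "\<And>y. y \<in> U \<Longrightarrow> f y = g y"
  shows "frechet_derivative f (at x) = frechet_derivative g (at x)"
proof -
  have "(f has_derivative D) (at x) \<longleftrightarrow> (g has_derivative D) (at x)" for D
    using has_derivative_transform_within_open[OF _ assms(1,2), where f=f and g=g]
      has_derivative_transform_within_open[OF _ assms(1,2), where f=g and g=f] assms(3) by auto
  then show ?thesis unfolding frechet_derivative_def by simp
qed

lemma differentiable_on_cong_open:
  assumes "open U" "f differentiable_on U" "\<And>y. y \<in> U \<Longrightarrow> f y = g y"
  shows "g differentiable_on U"
  using assms(2,3) has_derivative_transform_within_open[OF _ assms(1), where f=f and g=g]
  unfolding differentiable_on_eq_differentiable_at[OF assms(1)] differentiable_def by metis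

lemma smooth_on_open_coinduct:
  assumes U: "open U" and "P f"
    and step: "\<And>f. P f \<Longrightarrow> \<exists>D. (\<forall>x\<in>U. (f has_derivative D x) (at x)) \<and> (\<forall>v. P (\<lambda>x. D x v))"
  shows "smooth_on_open U f"
proof -
  have diff: "h differentiable_on U" if "P h" for h
    using step[OF that] U by (auto simp: differentiable_on_eq_differentiable_at differentiable_def)
  have "\<exists>h. P h \<and> (\<forall>x\<in>U. dirderiv f vs x = h x)" if "P f" for vs f
    using that
  proof (induction vs arbitrary: f)
    case (Cons v vs)
    then obtain h where h: "P h" "\<forall>x\<in>U. dirderiv f vs x = h x" by blast
    from step[OF h(1)] obtain D where D: "\<forall>x\<in>U. (h has_derivative D x) (at x)" "\<forall>v. P (\<lambda>x. D x v)"
      by blast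
    have "dirderiv f (v # vs) x = D x v" if "x \<in> U" for x
    proof -
      have "dirderiv f (v # vs) x = frechet_derivative h (at x) v"
        using frechet_derivative_cong_open[OF U that, of "dirderiv f vs" h] h(2) by simp
      then show ?thesis using frechet_derivative_at[OF D(1)[rule_format, OF that]] by simp
    qed
    then show ?case using D(2) by blast
  qed auto
  then show ?thesis
    unfolding smooth_on_open_def using U \<open>P f\<close> diff differentiable_on_cong_open by metis
qed

lemma smooth_on_open_imp_open: "smooth_on_open U f \<Longrightarrow> open U"
  by (simp add: smooth_on_open_def)

lemma smooth_on_open_imp_differentiable_on: "smooth_on_open U f \<Longrightarrow> f differentiable_on U"
  unfolding smooth_on_open_def by (metis dirderiv.simps(1))

lemma smooth_on_open_has_derivative:
  "smooth_on_open U f \<Longrightarrow> x \<in> U \<Longrightarrow> (f has_derivative frechet_derivative f (at x)) (at x)"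
  by (meson differentiable_on_eq_differentiable_at frechet_derivative_works
      smooth_on_open_imp_differentiable_on smooth_on_open_imp_open)

lemma smooth_on_open_imp_continuous_on: "smooth_on_open U f \<Longrightarrow> continuous_on U f"
  by (simp add: differentiable_imp_continuous_on smooth_on_open_imp_differentiable_on)

lemma smooth_on_open_frechet_derivative:
  assumes "smooth_on_open U f"
  shows "smooth_on_open U (\<lambda>x. frechet_derivative f (at x) v)"
proof -
  have "dirderiv (\<lambda>x. frechet_derivative f (at x) v) vs = dirderiv f (vs @ [v])" for vs
    by (simp add: dirderiv_append)
  then show ?thesis using assms unfolding smooth_on_open_def by metis
qed

lemma smooth_on_open_cong:
  assumes "smooth_on_open U f" "\<And>x. x \<in> U \<Longrightarrow> f x = g x"
  shows "smooth_on_open U g"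
proof (rule smooth_on_open_coinduct[where P="\<lambda>h. \<exists>f. smooth_on_open U f \<and> (\<forall>x\<in>U. f x = h x)"])
  show "open U" using assms(1) by (rule smooth_on_open_imp_open)
  fix h assume "\<exists>f. smooth_on_open U f \<and> (\<forall>x\<in>U. f x = h x)"
  then obtain f where f: "smooth_on_open U f" "\<forall>x\<in>U. f x = h x" by blast
  then show "\<exists>D. (\<forall>x\<in>U. (h has_derivative D x) (at x)) \<and>
      (\<forall>v. \<exists>f. smooth_on_open U f \<and> (\<forall>x\<in>U. f x = D x v))"
  proof (intro exI[of _ "\<lambda>x. frechet_derivative f (at x)"] conjI ballI allI)
    fix x assume "x \<in> U"
    then show "(h has_derivative frechet_derivative f (at x)) (at x)"
      using has_derivative_transform_within_open[OF smooth_on_open_has_derivative[OF f(1)]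
          smooth_on_open_imp_open[OF f(1)]] f(2) by blast
  next
    fix v show "\<exists>f'. smooth_on_open U f' \<and> (\<forall>x\<in>U. f' x = frechet_derivative f (at x) v)"
      using smooth_on_open_frechet_derivative[OF f(1)] by blast
  qed
qed (use assms in blast)

lemma smooth_on_open_subset:
  "smooth_on_open U f \<Longrightarrow> open V \<Longrightarrow> V \<subseteq> U \<Longrightarrow> smooth_on_open V f"
  unfolding smooth_on_open_def using differentiable_on_subset by blast

lemma smooth_on_open_const: "open U \<Longrightarrow> smooth_on_open U (\<lambda>x. c)"
  by (rule smooth_on_open_coinduct[where P="\<lambda>h. \<exists>c. h = (\<lambda>x. c)"])
     (auto intro!: exI[of _ "\<lambda>x v. 0"])

lemma smooth_on_open_bounded_linear:
  fixes f :: "'a::real_normed_vector \<Rightarrow> 'b::real_normed_vector"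
  assumes "open U" "bounded_linear f"
  shows "smooth_on_open U f"
proof (rule smooth_on_open_coinduct[where P="\<lambda>h. bounded_linear h \<or> (\<exists>c. h = (\<lambda>x. c))"])
  fix h :: "'a \<Rightarrow> 'b" assume "bounded_linear h \<or> (\<exists>c. h = (\<lambda>x. c))"
  then show "\<exists>D. (\<forall>x\<in>U. (h has_derivative D x) (at x)) \<and>
      (\<forall>v. bounded_linear (\<lambda>x. D x v) \<or> (\<exists>c. (\<lambda>x. D x v) = (\<lambda>x. c)))"
  proof (elim disjE exE)
    assume "bounded_linear h"
    then show ?thesis by (intro exI[of _ "\<lambda>x. h"]) (auto intro: bounded_linear_imp_has_derivative)
  qed (auto intro!: exI[of _ "\<lambda>x v. 0"])
qed (use assms in auto)

text \<open>Derivatives of products and powers are sums of terms of the same shape; a class of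
  functions whose derivatives stay in its closure under sums consists of smooth functions.\<close>

inductive sum_closure :: "(('a \<Rightarrow> 'b::plus) \<Rightarrow> bool) \<Rightarrow> ('a \<Rightarrow> 'b) \<Rightarrow> bool" for B where
  base: "B f \<Longrightarrow> sum_closure B f"
| add: "sum_closure B f \<Longrightarrow> sum_closure B g \<Longrightarrow> sum_closure B (\<lambda>x. f x + g x)"

lemma smooth_on_open_sum_closure:
  fixes B :: "('a::real_normed_vector \<Rightarrow> 'b::real_normed_vector) \<Rightarrow> bool"
  assumes U: "open U" and "sum_closure B f"
    and deriv_base: "\<And>f. B f \<Longrightarrow> \<exists>D. (\<forall>x\<in>U. (f has_derivative D x) (at x)) \<and> (\<forall>v. sum_closure B (\<lambda>x. D x v))"
  shows "smooth_on_open U f"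
proof (rule smooth_on_open_coinduct[where P="sum_closure B", OF U])
  show "sum_closure B f" by fact
next
  fix h assume "sum_closure B h"
  then show "\<exists>D. (\<forall>x\<in>U. (h has_derivative D x) (at x)) \<and> (\<forall>v. sum_closure B (\<lambda>x. D x v))"
  proof induction
    case (add f g)
    then obtain Df Dg where
      "\<forall>x\<in>U. (f has_derivative Df x) (at x)" "\<forall>v. sum_closure B (\<lambda>x. Df x v)"
      "\<forall>x\<in>U. (g has_derivative Dg x) (at x)" "\<forall>v. sum_closure B (\<lambda>x. Dg x v)"
      by blast
    then show ?case
      by (intro exI[of _ "\<lambda>x v. Df x v + Dg x v"]) (auto intro: has_derivative_add sum_closure.add)
  qed (rule deriv_base)
qed

lemma smooth_on_open_add:
  fixes f g :: "'a::real_normed_vector \<Rightarrow> 'b::real_normed_vector"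
  assumes "smooth_on_open U f" "smooth_on_open U g"
  shows "smooth_on_open U (\<lambda>x. f x + g x)"
proof (rule smooth_on_open_sum_closure[where B="smooth_on_open U"])
  show "open U" using assms(1) by (rule smooth_on_open_imp_open)
  show "sum_closure (smooth_on_open U) (\<lambda>x. f x + g x)"
    by (intro sum_closure.intros assms)
  fix h assume "smooth_on_open U h"
  then show "\<exists>D. (\<forall>x\<in>U. (h has_derivative D x) (at x)) \<and> (\<forall>v. sum_closure (smooth_on_open U) (\<lambda>x. D x v))"
    by (intro exI[of _ "\<lambda>x. frechet_derivative h (at x)"])
      (simp add: smooth_on_open_has_derivative smooth_on_open_frechet_derivative sum_closure.base)
qed

lemma smooth_on_open_bounded_bilinear:
  assumes bil: "bounded_bilinear pr" and "smooth_on_open U f" "smooth_on_open U g"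
  shows "smooth_on_open U (\<lambda>x. pr (f x) (g x))"
proof -
  define B where "B h \<longleftrightarrow> (\<exists>f g. smooth_on_open U f \<and> smooth_on_open U g \<and> h = (\<lambda>x. pr (f x) (g x)))"
    for h
  have U: "open U" using assms(2) by (rule smooth_on_open_imp_open)
  show ?thesis
  proof (rule smooth_on_open_sum_closure[where B=B, OF U])
    show "sum_closure B (\<lambda>x. pr (f x) (g x))"
      using assms(2,3) unfolding B_def by (blast intro: sum_closure.base)
    fix h assume "B h"
    then obtain f g where f: "smooth_on_open U f" and g: "smooth_on_open U g"
      and h: "h = (\<lambda>x. pr (f x) (g x))"
      unfolding B_def by blast
    let ?D = "\<lambda>x v. pr (f x) (frechet_derivative g (at x) v) + pr (frechet_derivative f (at x) v) (g x)"
    have "(h has_derivative ?D x) (at x)" if "x \<in> U" for x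
      unfolding h using bounded_bilinear.FDERIV[OF bil smooth_on_open_has_derivative[OF f that]
          smooth_on_open_has_derivative[OF g that]] .
    moreover have "sum_closure B (\<lambda>x. ?D x v)" for v
      unfolding B_def
      by (rule sum_closure.add; rule sum_closure.base)
        (use f g smooth_on_open_frechet_derivative[OF f] smooth_on_open_frechet_derivative[OF g] in blast)+
    ultimately show "\<exists>D. (\<forall>x\<in>U. (h has_derivative D x) (at x)) \<and> (\<forall>v. sum_closure B (\<lambda>x. D x v))"
      by (intro exI[of _ ?D]) blast
  qed
qed

lemmas smooth_on_open_mult = smooth_on_open_bounded_bilinear[OF bounded_bilinear_mult]
lemmas smooth_on_open_scaleR = smooth_on_open_bounded_bilinear[OF bounded_bilinear_scaleR]
lemmas smooth_on_open_inner = smooth_on_open_bounded_bilinear[OF bounded_bilinear_inner]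

lemma smooth_on_open_bounded_linear_comp:
  fixes L :: "'b::real_normed_vector \<Rightarrow> 'c::real_normed_vector"
  assumes L: "bounded_linear L" and "smooth_on_open U f"
  shows "smooth_on_open U (\<lambda>x. L (f x))"
proof (rule smooth_on_open_coinduct[where P="\<lambda>h. \<exists>f. smooth_on_open U f \<and> h = (\<lambda>x. L (f x))"])
  show "open U" using assms(2) by (rule smooth_on_open_imp_open)
  fix h :: "'a \<Rightarrow> 'c" assume "\<exists>f. smooth_on_open U f \<and> h = (\<lambda>x. L (f x))"
  then obtain f where f: "smooth_on_open U f" "h = (\<lambda>x. L (f x))" by blast
  show "\<exists>D. (\<forall>x\<in>U. (h has_derivative D x) (at x)) \<and>
      (\<forall>v. \<exists>f. smooth_on_open U f \<and> (\<lambda>x. D x v) = (\<lambda>x. L (f x)))"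
    unfolding f(2)
    using bounded_linear.has_derivative[OF L smooth_on_open_has_derivative[OF f(1)]]
      smooth_on_open_frechet_derivative[OF f(1)]
    by (intro exI[of _ "\<lambda>x v. L (frechet_derivative f (at x) v)"]) blast
qed (use assms in blast)

lemma smooth_on_open_comp_bounded_linear:
  fixes L :: "'a::real_normed_vector \<Rightarrow> 'b::real_normed_vector"
  assumes L: "bounded_linear L" and "smooth_on_open U f"
  shows "smooth_on_open (L -` U) (\<lambda>x. f (L x))"
proof (rule smooth_on_open_coinduct[where P="\<lambda>h. \<exists>f. smooth_on_open U f \<and> h = (\<lambda>x. f (L x))"])
  show "open (L -` U)"
    using smooth_on_open_imp_open[OF assms(2)] continuous_open_vimage linear_continuous_at L by blast
  fix h assume "\<exists>f. smooth_on_open U f \<and> h = (\<lambda>x. f (L x))"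
  then obtain f where f: "smooth_on_open U f" "h = (\<lambda>x. f (L x))" by blast
  have "(h has_derivative (\<lambda>v. frechet_derivative f (at (L x)) (L v))) (at x)" if "x \<in> L -` U" for x
    unfolding f(2)
    using diff_chain_at[OF bounded_linear_imp_has_derivative[OF L] smooth_on_open_has_derivative[OF f(1)]] that
    by (simp add: comp_def)
  then show "\<exists>D. (\<forall>x\<in>L -` U. (h has_derivative D x) (at x)) \<and>
      (\<forall>v. \<exists>f. smooth_on_open U f \<and> (\<lambda>x. D x v) = (\<lambda>x. f (L x)))"
    using smooth_on_open_frechet_derivative[OF f(1)]
    by (intro exI[of _ "\<lambda>x v. frechet_derivative f (at (L x)) (L v)"]) blast
qed (use assms in blast)

lemma smooth_on_open_minus:
  fixes f :: "'a::real_normed_vector \<Rightarrow> 'b::real_normed_vector"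
  shows "smooth_on_open U f \<Longrightarrow> smooth_on_open U (\<lambda>x. - f x)"
  by (rule smooth_on_open_bounded_linear_comp[OF bounded_linear_minus[OF bounded_linear_ident]])

lemma smooth_on_open_diff:
  fixes f g :: "'a::real_normed_vector \<Rightarrow> 'b::real_normed_vector"
  shows "smooth_on_open U f \<Longrightarrow> smooth_on_open U g \<Longrightarrow> smooth_on_open U (\<lambda>x. f x - g x)"
  using smooth_on_open_add[OF _ smooth_on_open_minus, of U f g] by simp

lemma smooth_on_open_sum:
  fixes f :: "'i \<Rightarrow> 'a::real_normed_vector \<Rightarrow> 'b::real_normed_vector"
  assumes "finite I" "open U" "\<And>i. i \<in> I \<Longrightarrow> smooth_on_open U (f i)"
  shows "smooth_on_open U (\<lambda>x. \<Sum>i\<in>I. f i x)"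
  using assms(1,3)
  by induction (simp_all add: smooth_on_open_const[OF assms(2)] smooth_on_open_add)

lemma smooth_on_open_Pair:
  fixes f :: "'a::real_normed_vector \<Rightarrow> 'b::real_normed_vector" and g :: "'a \<Rightarrow> 'c::real_normed_vector"
  assumes "smooth_on_open U f" "smooth_on_open U g"
  shows "smooth_on_open U (\<lambda>x. (f x, g x))"
proof -
  have "smooth_on_open U (\<lambda>x. (f x, 0) + (0, g x))"
    by (intro smooth_on_open_add smooth_on_open_bounded_linear_comp[OF _ assms(1)]
        smooth_on_open_bounded_linear_comp[OF _ assms(2)] bounded_linear_Pair
        bounded_linear_ident bounded_linear_zero)
  then show ?thesis by simp
qed

lemma smooth_on_open_powr:
  fixes f :: "'a::real_normed_vector \<Rightarrow> real"
  assumes f: "smooth_on_open U f" and pos: "\<forall>x\<in>U. f x > 0"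
  shows "smooth_on_open U (\<lambda>x. f x powr r)"
proof -
  define B where "B h \<longleftrightarrow> (\<exists>a r. smooth_on_open U a \<and> h = (\<lambda>x. a x * f x powr r))" for h
  have U: "open U" using f by (rule smooth_on_open_imp_open)
  show ?thesis
  proof (rule smooth_on_open_sum_closure[where B=B, OF U])
    show "sum_closure B (\<lambda>x. f x powr r)"
      using smooth_on_open_const[OF U, of 1] unfolding B_def by (auto intro!: sum_closure.base exI[of _ r])
    fix h assume "B h"
    then obtain a r where a: "smooth_on_open U a" and h: "h = (\<lambda>x. a x * f x powr r)"
      unfolding B_def by blast
    let ?a' = "\<lambda>v x. frechet_derivative a (at x) v" and ?f' = "\<lambda>v x. frechet_derivative f (at x) v"
    let ?D = "\<lambda>x v. ?a' v x * f x powr r + (a x * r * ?f' v x) * f x powr (r - 1)"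
    have "(h has_derivative ?D x) (at x)" if x: "x \<in> U" for x
    proof -
      have fx: "f x > 0" using pos x by blast
      have "((\<lambda>x. f x powr r) has_derivative (\<lambda>v. f x powr r * (?f' v x * r / f x))) (at x)"
        using has_derivative_powr[OF smooth_on_open_has_derivative[OF f x] has_derivative_const, of r]
          fx by simp
      from has_derivative_mult[OF smooth_on_open_has_derivative[OF a x] this]
      show ?thesis
        unfolding h using fx by (simp add: powr_diff field_simps)
    qed
    moreover have "sum_closure B (\<lambda>x. ?D x v)" for v
    proof (rule sum_closure.add; rule sum_closure.base)
      show "B (\<lambda>x. ?a' v x * f x powr r)"
        unfolding B_def using smooth_on_open_frechet_derivative[OF a] by blast
      have "smooth_on_open U (\<lambda>x. a x * r * ?f' v x)"
        by (rule smooth_on_open_mult[OF smooth_on_open_mult[OF a smooth_on_open_const[OF U]]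
            smooth_on_open_frechet_derivative[OF f]])
      then show "B (\<lambda>x. (a x * r * ?f' v x) * f x powr (r - 1))"
        unfolding B_def by blast
    qed
    ultimately show "\<exists>D. (\<forall>x\<in>U. (h has_derivative D x) (at x)) \<and> (\<forall>v. sum_closure B (\<lambda>x. D x v))"
      by (intro exI[of _ ?D]) blast
  qed
qed

lemma smooth_on_open_divide:
  fixes f g :: "'a::real_normed_vector \<Rightarrow> real"
  assumes "smooth_on_open U f" "smooth_on_open U g" "\<forall>x\<in>U. g x \<noteq> 0"
  shows "smooth_on_open U (\<lambda>x. f x / g x)"
proof -
  have "smooth_on_open U (\<lambda>x. (g x * g x) powr (-1))"
    by (rule smooth_on_open_powr[OF smooth_on_open_mult[OF assms(2,2)]]) (use assms(3) not_real_square_gt_zero in blast)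
  then have "smooth_on_open U (\<lambda>x. f x * g x * (g x * g x) powr (-1))"
    by (rule smooth_on_open_mult[OF smooth_on_open_mult[OF assms(1,2)]])
  then show ?thesis
    by (rule smooth_on_open_cong) (use assms(3) in \<open>auto simp: powr_minus_divide\<close>)
qed

lemma smooth_on_open_sqrt:
  fixes f :: "'a::real_normed_vector \<Rightarrow> real"
  assumes "smooth_on_open U f" "\<forall>x\<in>U. f x > 0"
  shows "smooth_on_open U (\<lambda>x. sqrt (f x))"
  using smooth_on_open_powr[OF assms, of "1/2"]
  by (rule smooth_on_open_cong) (use assms(2) in \<open>auto simp: powr_half_sqrt\<close>)

section \<open>Tangent spaces of regular level sets\<close>

lemma tangent_space_subset_kernel:
  fixes g :: "'a::euclidean_space \<Rightarrow> real"
  assumes U: "open U" "x \<in> U" and X: "X \<inter> U \<subseteq> {y. g y = 0}"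
    and G: "(g has_derivative G) (at x)" and v: "v \<in> tangent_space X x"
  shows "G v = 0"
proof -
  obtain \<gamma> \<epsilon> where \<gamma>: "\<epsilon> > 0" "\<And>t. \<bar>t\<bar> < \<epsilon> \<Longrightarrow> \<gamma> t \<in> X" "\<gamma> 0 = x"
    "(\<gamma> has_derivative (\<lambda>t. t *\<^sub>R v)) (at 0)"
    using v unfolding tangent_space_def has_vector_derivative_def by blast
  obtain r where r: "r > 0" "ball x r \<subseteq> U" using U open_contains_ball by blast
  have "isCont \<gamma> 0" using \<gamma>(4) has_derivative_continuous by blast
  then obtain d where d: "d > 0" "\<And>t. dist t 0 < d \<Longrightarrow> dist (\<gamma> t) x < r"
    using r(1) \<gamma>(3) unfolding continuous_at_eps_delta by metis
  have vanish: "g (\<gamma> t) = 0" if "t \<in> ball 0 (min d \<epsilon>)" for t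
  proof -
    have "\<gamma> t \<in> X" using \<gamma>(2) that by simp
    moreover have "\<gamma> t \<in> U" using d(2)[of t] r(2) that by (auto simp: dist_commute)
    ultimately show ?thesis using X by blast
  qed
  have "((\<lambda>t. g (\<gamma> t)) has_derivative (\<lambda>t. G (t *\<^sub>R v))) (at 0)"
    using diff_chain_at[OF \<gamma>(4), of g G] G \<gamma>(3) by (simp add: comp_def)
  moreover have "((\<lambda>t. g (\<gamma> t)) has_derivative (\<lambda>t. 0)) (at 0)"
    by (rule has_derivative_transform_within_open[where f="\<lambda>t. 0" and s="ball 0 (min d \<epsilon>)"])
      (use d(1) \<gamma>(1) vanish in auto)
  ultimately have "(\<lambda>t. G (t *\<^sub>R v)) = (\<lambda>t. 0)" by (rule has_derivative_unique)
  then show "G v = 0" by (metis scaleR_one)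
qed

lemma exists_root_near_linear:
  fixes \<phi> :: "real \<Rightarrow> real"
  assumes "continuous_on {-m..m} \<phi>" "m \<ge> 0" "a > 0"
    and close: "\<And>s. \<bar>s\<bar> \<le> m \<Longrightarrow> \<bar>\<phi> s - s * a\<bar> \<le> m * a / 2"
  shows "\<exists>s. \<bar>s\<bar> \<le> m \<and> \<phi> s = 0"
proof -
  have "m * a \<ge> 0" using assms(2,3) by simp
  then have "\<phi> (-m) \<le> 0" "\<phi> m \<ge> 0"
    using close[of m] close[of "-m"] assms(2) unfolding abs_le_iff by linarith+
  then obtain s where "-m \<le> s" "s \<le> m" "\<phi> s = 0"
    using IVT'[of \<phi> "-m" 0 m] assms(1,2) by auto
  then show ?thesis by (intro exI[of _ s]) auto
qed

lemma level_set_root_near: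
  fixes g :: "'a::real_normed_vector \<Rightarrow> real"
  assumes G: "(g has_derivative G) (at x)" and gx: "g x = 0" and U: "open U" "x \<in> U"
    and cont: "continuous_on U g" and Gv: "G v = 0" and Gn: "G n > 0" and k: "k > 0"
  shows "\<exists>\<delta>>0. \<forall>t. \<bar>t\<bar> < \<delta> \<longrightarrow>
    (\<exists>s. \<bar>s\<bar> \<le> k * \<bar>t\<bar> \<and> x + t *\<^sub>R v + s *\<^sub>R n \<in> U \<and> g (x + t *\<^sub>R v + s *\<^sub>R n) = 0)"
proof -
  have lin: "linear G" using G has_derivative_linear by blast
  define a where "a = G n"
  define c where "c = norm v + k * norm n"
  have "n \<noteq> 0" using Gn linear_0[OF lin] by auto
  then have a: "a > 0" and c: "c > 0" using Gn k unfolding a_def c_def by (simp_all add: add_nonneg_pos)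
  define \<eta> where "\<eta> = k * a / (2 * c)"
  have "\<eta> > 0" using k a c unfolding \<eta>_def by simp
  then obtain \<rho> where \<rho>: "\<rho> > 0" "\<And>y. norm (y - x) < \<rho> \<Longrightarrow> norm (g y - g x - G (y - x)) \<le> \<eta> * norm (y - x)"
    using G unfolding has_derivative_at_alt by blast
  obtain r where r: "r > 0" "ball x r \<subseteq> U" using U open_contains_ball by blast
  define \<delta> where "\<delta> = min \<rho> r / c"
  have "\<delta> > 0" using \<rho> r c unfolding \<delta>_def by simp
  moreover have "\<exists>s. \<bar>s\<bar> \<le> k * \<bar>t\<bar> \<and> x + t *\<^sub>R v + s *\<^sub>R n \<in> U \<and> g (x + t *\<^sub>R v + s *\<^sub>R n) = 0"
    if t: "\<bar>t\<bar> < \<delta>" for t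
  proof -
    define m where "m = k * \<bar>t\<bar>"
    define \<phi> where "\<phi> s = g (x + t *\<^sub>R v + s *\<^sub>R n)" for s
    have step: "norm (t *\<^sub>R v + s *\<^sub>R n) \<le> \<bar>t\<bar> * c" if "\<bar>s\<bar> \<le> m" for s
    proof -
      have "norm (t *\<^sub>R v + s *\<^sub>R n) \<le> \<bar>t\<bar> * norm v + \<bar>s\<bar> * norm n"
        using norm_triangle_ineq[of "t *\<^sub>R v" "s *\<^sub>R n"] by simp
      also have "\<dots> \<le> \<bar>t\<bar> * norm v + m * norm n"
        using that by (simp add: mult_right_mono)
      finally show ?thesis unfolding m_def c_def by (simp add: algebra_simps)
    qed
    have "\<bar>t\<bar> * c < min \<rho> r" using t c unfolding \<delta>_def by (simp add: field_simps)
    then have near: "norm (t *\<^sub>R v + s *\<^sub>R n) < min \<rho> r" if "\<bar>s\<bar> \<le> m" for s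
      using step[OF that] by linarith
    have inU: "x + t *\<^sub>R v + s *\<^sub>R n \<in> U" if "\<bar>s\<bar> \<le> m" for s
    proof -
      have "x + (t *\<^sub>R v + s *\<^sub>R n) \<in> ball x r"
        using near[OF that] norm_minus_cancel[of "t *\<^sub>R v + s *\<^sub>R n"] by (simp add: dist_norm)
      then show ?thesis using r(2) by (auto simp: add.assoc)
    qed
    have "\<eta> * (\<bar>t\<bar> * c) = m * a / 2"
      unfolding \<eta>_def m_def using c by (simp add: field_simps)
    then have "\<bar>\<phi> s - s * a\<bar> \<le> m * a / 2" if "\<bar>s\<bar> \<le> m" for s
    proof -
      have "G (t *\<^sub>R v + s *\<^sub>R n) = s * a"
        using lin Gv unfolding a_def by (simp add: linear_add linear_scale)
      then have "\<bar>\<phi> s - s * a\<bar> \<le> \<eta> * norm (t *\<^sub>R v + s *\<^sub>R n)"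
        using \<rho>(2)[of "x + t *\<^sub>R v + s *\<^sub>R n"] near[OF that] gx unfolding \<phi>_def by (simp add: add.assoc)
      also have "\<dots> \<le> \<eta> * (\<bar>t\<bar> * c)"
        using step[OF that] \<open>\<eta> > 0\<close> by (simp add: mult_left_mono)
      finally show ?thesis using \<open>\<eta> * (\<bar>t\<bar> * c) = m * a / 2\<close> by simp
    qed
    moreover have "continuous_on {-m..m} \<phi>"
      unfolding \<phi>_def by (rule continuous_on_compose2[OF cont]) (auto intro!: continuous_intros inU)
    moreover have "m \<ge> 0" using k by (simp add: m_def)
    ultimately obtain s where "\<bar>s\<bar> \<le> m" "\<phi> s = 0"
      using exists_root_near_linear a by blast
    then show ?thesis using inU[of s] unfolding \<phi>_def m_def by (intro exI[of _ s]) auto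
  qed
  ultimately show ?thesis by blast
qed

lemma has_vector_derivative_line_plus_little_o:
  assumes S0: "S 0 = 0" and small: "\<And>k. k > 0 \<Longrightarrow> \<exists>d>0. \<forall>t. \<bar>t\<bar> < d \<longrightarrow> \<bar>S t\<bar> \<le> k * \<bar>t\<bar>"
  shows "((\<lambda>t. x + t *\<^sub>R v + S t *\<^sub>R n) has_vector_derivative v) (at 0)"
  unfolding has_vector_derivative_def has_derivative_at_alt
proof (intro conjI allI impI bounded_linear_scaleR_left)
  fix e :: real assume "e > 0"
  then obtain d where d: "d > 0" "\<And>t. \<bar>t\<bar> < d \<Longrightarrow> \<bar>S t\<bar> \<le> e / (norm n + 1) * \<bar>t\<bar>"
    using small[of "e / (norm n + 1)"] by (auto simp: add_nonneg_pos)
  have "norm (S t *\<^sub>R n) \<le> e * \<bar>t\<bar>" if "\<bar>t\<bar> < d" for t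
  proof -
    have "norm (S t *\<^sub>R n) = \<bar>S t\<bar> * norm n" by simp
    also have "\<dots> \<le> e / (norm n + 1) * \<bar>t\<bar> * norm n"
      by (rule mult_right_mono[OF d(2)[OF that]]) simp
    also have "\<dots> \<le> e / (norm n + 1) * \<bar>t\<bar> * (norm n + 1)"
      using \<open>e > 0\<close> by (intro mult_left_mono) simp_all
    also have "\<dots> = e * \<bar>t\<bar>"
      using norm_ge_zero[of n] by (simp add: field_simps add_nonneg_pos del: norm_ge_zero)
    finally show ?thesis .
  qed
  then show "\<exists>d>0. \<forall>t. norm (t - 0) < d \<longrightarrow>
      norm (x + t *\<^sub>R v + S t *\<^sub>R n - (x + 0 *\<^sub>R v + S 0 *\<^sub>R n) - (t - 0) *\<^sub>R v) \<le> e * norm (t - 0)"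
    using d(1) S0 by auto
qed

lemma little_o_selection:
  fixes R :: "real \<Rightarrow> real set"
  assumes "0 \<in> R 0" and near: "\<And>k. k > 0 \<Longrightarrow> \<exists>\<delta>>0. \<forall>t. \<bar>t\<bar> < \<delta> \<longrightarrow> (\<exists>s\<in>R t. \<bar>s\<bar> \<le> k * \<bar>t\<bar>)"
  obtains \<delta> S where "\<delta> > 0" "S 0 = 0" "\<And>t. \<bar>t\<bar> < \<delta> \<Longrightarrow> S t \<in> R t"
    "\<And>k. k > 0 \<Longrightarrow> \<exists>d>0. \<forall>t. \<bar>t\<bar> < d \<longrightarrow> \<bar>S t\<bar> \<le> k * \<bar>t\<bar>"
proof -
  obtain \<delta> where \<delta>: "\<delta> > 0" "\<And>t. \<bar>t\<bar> < \<delta> \<Longrightarrow> \<exists>s\<in>R t. \<bar>s\<bar> \<le> \<bar>t\<bar>"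
    using near[of 1] by auto
  \<comment> \<open>For \<open>t \<noteq> 0\<close> pick an element of \<open>R t\<close> of least absolute value, up to an error \<open>t\<^sup>2\<close>.\<close>
  define \<phi> where "\<phi> t = Inf (abs ` R t)" for t
  define S where "S t = (if t = 0 then 0 else SOME s. s \<in> R t \<and> \<bar>s\<bar> < \<phi> t + t\<^sup>2)" for t
  have bdd: "bdd_below (abs ` R t)" for t by (rule bdd_belowI[of _ 0]) auto
  have S: "S t \<in> R t \<and> (t \<noteq> 0 \<longrightarrow> \<bar>S t\<bar> < \<phi> t + t\<^sup>2)" if t: "\<bar>t\<bar> < \<delta>" for t
  proof (cases "t = 0")
    case False
    have "abs ` R t \<noteq> {}" using \<delta>(2)[OF t] by blast
    moreover have "Inf (abs ` R t) < \<phi> t + t\<^sup>2" using False unfolding \<phi>_def by simp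
    ultimately obtain y where "y \<in> abs ` R t" "y < \<phi> t + t\<^sup>2" by (rule cInf_lessD[elim_format]) blast
    then have "\<exists>s. s \<in> R t \<and> \<bar>s\<bar> < \<phi> t + t\<^sup>2" by blast
    from someI_ex[OF this] show ?thesis using False unfolding S_def by simp
  qed (use assms(1) S_def in simp)
  have "\<exists>d>0. \<forall>t. \<bar>t\<bar> < d \<longrightarrow> \<bar>S t\<bar> \<le> k * \<bar>t\<bar>" if "k > 0" for k
  proof -
    obtain \<delta>' where \<delta>': "\<delta>' > 0" "\<And>t. \<bar>t\<bar> < \<delta>' \<Longrightarrow> \<exists>s\<in>R t. \<bar>s\<bar> \<le> k / 2 * \<bar>t\<bar>"
      using near[of "k / 2"] \<open>k > 0\<close> by auto
    have "\<bar>S t\<bar> \<le> k * \<bar>t\<bar>" if t: "\<bar>t\<bar> < min (min \<delta> \<delta>') (k / 2)" for t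
    proof (cases "t = 0")
      case False
      obtain s where s: "s \<in> R t" "\<bar>s\<bar> \<le> k / 2 * \<bar>t\<bar>" using \<delta>'(2)[of t] t by auto
      have "\<phi> t \<le> \<bar>s\<bar>" unfolding \<phi>_def using s(1) bdd by (intro cInf_lower) auto
      moreover have "\<bar>S t\<bar> < \<phi> t + t\<^sup>2" using S[of t] t False by auto
      moreover have "t\<^sup>2 \<le> k / 2 * \<bar>t\<bar>"
        using mult_right_mono[of "\<bar>t\<bar>" "k / 2" "\<bar>t\<bar>"] t by (simp add: power2_eq_square)
      ultimately show ?thesis using s(2) by linarith
    qed (simp add: S_def)
    then show ?thesis using \<delta>(1) \<delta>'(1) \<open>k > 0\<close> by (intro exI[of _ "min (min \<delta> \<delta>') (k / 2)"]) auto
  qed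
  then show ?thesis using that[of \<delta> S] \<delta>(1) S by (simp add: S_def)
qed

lemma kernel_subset_tangent_space:
  fixes g :: "'a::euclidean_space \<Rightarrow> real"
  assumes U: "open U" "x \<in> U" and X: "X \<inter> U = {y\<in>U. g y = 0}" "x \<in> X"
    and G: "(g has_derivative G) (at x)" and cont: "continuous_on U g" and G0: "G \<noteq> (\<lambda>v. 0)"
    and Gv: "G v = 0"
  shows "v \<in> tangent_space X x"
proof -
  have gx: "g x = 0" using X U(2) by blast
  obtain w where "G w \<noteq> 0" using G0 by auto
  then have "G w > 0 \<or> G (- w) > 0" using linear_neg[OF has_derivative_linear[OF G], of w] by linarith
  then obtain n where Gn: "G n > 0" by blast
  define roots where "roots t = {s. x + t *\<^sub>R v + s *\<^sub>R n \<in> U \<and> g (x + t *\<^sub>R v + s *\<^sub>R n) = 0}" for t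
  have "0 \<in> roots 0" using U(2) gx unfolding roots_def by simp
  moreover have "\<exists>\<delta>>0. \<forall>t. \<bar>t\<bar> < \<delta> \<longrightarrow> (\<exists>s\<in>roots t. \<bar>s\<bar> \<le> k * \<bar>t\<bar>)" if "k > 0" for k
    using level_set_root_near[OF G gx U cont Gv Gn that] unfolding roots_def by blast
  ultimately obtain \<delta> S where S: "\<delta> > 0" "S 0 = 0" "\<And>t. \<bar>t\<bar> < \<delta> \<Longrightarrow> S t \<in> roots t"
    "\<And>k. k > 0 \<Longrightarrow> \<exists>d>0. \<forall>t. \<bar>t\<bar> < d \<longrightarrow> \<bar>S t\<bar> \<le> k * \<bar>t\<bar>"
    using little_o_selection by blast
  have "((\<lambda>t. x + t *\<^sub>R v + S t *\<^sub>R n) has_vector_derivative v) (at 0)"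
    by (rule has_vector_derivative_line_plus_little_o[OF S(2,4)])
  moreover have "x + t *\<^sub>R v + S t *\<^sub>R n \<in> X" if "\<bar>t\<bar> < \<delta>" for t
    using S(3)[OF that] X(1) unfolding roots_def by blast
  ultimately show ?thesis
    unfolding tangent_space_def using S(1,2)
    by (intro CollectI exI[of _ "\<lambda>t. x + t *\<^sub>R v + S t *\<^sub>R n"] exI[of _ \<delta>]) simp
qed

lemma tangent_space_level_set:
  fixes g :: "'a::euclidean_space \<Rightarrow> real"
  assumes U: "open U" "x \<in> U" and X: "X \<inter> U = {y\<in>U. g y = 0}" "x \<in> X"
    and G: "(g has_derivative G) (at x)" and cont: "continuous_on U g" and G0: "G \<noteq> (\<lambda>v. 0)"
  shows "tangent_space X x = {v. G v = 0}"
  using tangent_space_subset_kernel[OF U _ G] kernel_subset_tangent_space[OF U X G cont G0] X(1)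
  by blast

section \<open>Linear algebra\<close>

lemma linear_functional_inner:
  fixes L :: "'a::euclidean_space \<Rightarrow> real"
  assumes "linear L"
  shows "L v = (\<Sum>j\<in>Basis. L j *\<^sub>R j) \<bullet> v"
proof -
  have "L v = L (\<Sum>j\<in>Basis. (v \<bullet> j) *\<^sub>R j)" by (simp add: euclidean_representation)
  also have "\<dots> = (\<Sum>j\<in>Basis. (v \<bullet> j) * L j)"
    by (simp add: linear_sum[OF assms] linear_scale[OF assms])
  finally show ?thesis by (simp add: inner_sum_left inner_commute[of v] mult.commute)
qed

lemma exists_nonzero_orthogonal:
  fixes n :: "'a::euclidean_space"
  assumes "DIM('a) \<ge> 2"
  shows "\<exists>w. n \<bullet> w = 0 \<and> w \<noteq> 0"
proof -
  obtain i :: 'a where i: "i \<in> Basis" using nonempty_Basis by blast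
  have "card (Basis - {i}) = DIM('a) - 1" using i by (simp add: card_Diff_singleton)
  then have "card (Basis - {i}) \<ge> 1" using assms by linarith
  then have "Basis - {i} \<noteq> {}" by (metis card.empty not_one_le_zero)
  then obtain j where j: "j \<in> Basis" "j \<noteq> i" by blast
  show ?thesis
  proof (cases "n \<bullet> i = 0")
    case True
    then show ?thesis using i by (intro exI[of _ i]) (auto simp: nonzero_Basis)
  next
    case False
    define w where "w = (n \<bullet> j) *\<^sub>R i - (n \<bullet> i) *\<^sub>R j"
    have "w \<bullet> j \<noteq> 0" unfolding w_def using i j False by (simp add: inner_diff_left inner_Basis)
    moreover have "n \<bullet> w = 0" unfolding w_def by (simp add: inner_diff_right algebra_simps)
    ultimately show ?thesis by (intro exI[of _ w]) auto
  qed
qed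

definition perp_proj :: "'a::real_inner \<Rightarrow> 'a \<Rightarrow> 'a" where
  "perp_proj n y = y - ((y \<bullet> n) / (n \<bullet> n)) *\<^sub>R n"

lemma perp_proj_orthogonal: "n \<bullet> perp_proj n y = 0"
  unfolding perp_proj_def by (cases "n = 0") (simp_all add: inner_diff_right inner_commute)

lemma perp_proj_decompose: "y = perp_proj n y + ((y \<bullet> n) / (n \<bullet> n)) *\<^sub>R n"
  unfolding perp_proj_def by simp

lemma perp_proj_inner: "n \<bullet> v = 0 \<Longrightarrow> perp_proj n y \<bullet> v = y \<bullet> v"
  unfolding perp_proj_def by (simp add: inner_diff_left)

lemma perp_proj_id: "n \<bullet> y = 0 \<Longrightarrow> perp_proj n y = y"
  unfolding perp_proj_def by (simp add: inner_commute)

lemma perp_proj_linear: "linear (perp_proj n)"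
  unfolding perp_proj_def
  by (intro linearI) (simp_all add: inner_add_left scaleR_add_left add_divide_distrib algebra_simps)

lemma perp_proj_self: "perp_proj n n = 0"
  unfolding perp_proj_def by (cases "n = 0") simp_all

lemma covector_rep_hyperplane:
  assumes T: "tangent_space X y = {v. n \<bullet> v = 0}" and \<xi>: "\<And>v. \<xi> v = m \<bullet> v"
  shows "covector_rep X y \<xi> = perp_proj n m"
  unfolding covector_rep_def
proof (rule the_equality)
  show "perp_proj n m \<in> tangent_space X y \<and> (\<forall>v\<in>tangent_space X y. perp_proj n m \<bullet> v = \<xi> v)"
    unfolding T \<xi> by (simp add: perp_proj_orthogonal perp_proj_inner)
next
  fix w assume w: "w \<in> tangent_space X y \<and> (\<forall>v\<in>tangent_space X y. w \<bullet> v = \<xi> v)"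
  define d where "d = w - perp_proj n m"
  have "d \<in> tangent_space X y"
    using w unfolding d_def T by (simp add: inner_diff_right perp_proj_orthogonal)
  then have "d \<bullet> d = 0"
    using w unfolding d_def T \<xi> by (simp add: inner_diff_left perp_proj_inner)
  then show "w = perp_proj n m" unfolding d_def by simp
qed

definition positive_root :: "real \<Rightarrow> real \<Rightarrow> real \<Rightarrow> real" where
  "positive_root a b c = (- b + sqrt (b\<^sup>2 - a * c)) / a"

lemma positive_root_iff:
  fixes a b c :: real
  assumes a: "a > 0" and c: "c < 0"
  shows "s > 0 \<and> a * s\<^sup>2 + 2 * s * b + c = 0 \<longleftrightarrow> s = positive_root a b c"
proof -
  have disc: "b\<^sup>2 - a * c > b\<^sup>2" using a c by (simp add: mult_pos_neg)
  have square: "(a * s + b)\<^sup>2 = a * (a * s\<^sup>2 + 2 * s * b + c) + (b\<^sup>2 - a * c)"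
    by (simp add: power2_eq_square algebra_simps)
  have "s > 0 \<and> a * s\<^sup>2 + 2 * s * b + c = 0 \<longleftrightarrow> a * s + b > 0 \<and> (a * s + b)\<^sup>2 = b\<^sup>2 - a * c"
  proof
    assume s: "s > 0 \<and> a * s\<^sup>2 + 2 * s * b + c = 0"
    then have sq: "(a * s + b)\<^sup>2 = b\<^sup>2 - a * c" using square by simp
    moreover have "a * s + b > 0"
    proof (rule ccontr)
      assume "\<not> ?thesis"
      moreover have "a * s > 0" using s a by simp
      ultimately have "\<bar>a * s + b\<bar> \<le> \<bar>b\<bar>" by linarith
      then have "(a * s + b)\<^sup>2 \<le> b\<^sup>2" by (simp add: abs_le_square_iff)
      then show False using sq disc by simp
    qed
    ultimately show "a * s + b > 0 \<and> (a * s + b)\<^sup>2 = b\<^sup>2 - a * c" by simp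
  next
    assume h: "a * s + b > 0 \<and> (a * s + b)\<^sup>2 = b\<^sup>2 - a * c"
    then have "(a * s + b)\<^sup>2 > b\<^sup>2" using disc by simp
    then have "a * s + b > \<bar>b\<bar>" using h by (metis abs_le_square_iff abs_of_pos not_le)
    then have "a * s > 0" by linarith
    then show "s > 0 \<and> a * s\<^sup>2 + 2 * s * b + c = 0"
      using h square a by (simp add: zero_less_mult_iff)
  qed
  also have "\<dots> \<longleftrightarrow> a * s + b = sqrt (b\<^sup>2 - a * c)"
  proof -
    have "b\<^sup>2 - a * c > 0" using disc zero_le_power2[of b] by linarith
    then show ?thesis
      by (metis real_sqrt_gt_zero real_sqrt_pow2 real_sqrt_unique less_imp_le)
  qed
  also have "\<dots> \<longleftrightarrow> s = positive_root a b c"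
    unfolding positive_root_def using a by (auto simp: field_simps)
  finally show ?thesis .
qed

section \<open>Ellipsoids and their contact points\<close>

locale ellipsoid =
  fixes M :: "'a::euclidean_space \<Rightarrow> 'a" and r2 :: real
  assumes linear_M: "linear M"
    and symmetric: "\<And>u v. M u \<bullet> v = M v \<bullet> u"
    and positive: "\<And>u. u \<noteq> 0 \<Longrightarrow> M u \<bullet> u > 0"
    and r2_pos: "r2 > 0"
begin

lemma inj_M: "inj M"
  unfolding linear_injective_0[OF linear_M] using positive by fastforce

definition Minv :: "'a \<Rightarrow> 'a" where "Minv = inv M"

lemma M_Minv [simp]: "M (Minv y) = y"
  unfolding Minv_def by (rule surj_f_inv_f[OF linear_inj_imp_surj[OF linear_M inj_M]])

lemma Minv_M [simp]: "Minv (M u) = u"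
  unfolding Minv_def by (rule inv_f_f[OF inj_M])

lemma bounded_linear_M: "bounded_linear M"
  using linear_M by (simp add: linear_conv_bounded_linear)

lemma bounded_linear_Minv: "bounded_linear Minv"
  unfolding Minv_def by (rule inj_linear_imp_inv_bounded_linear[OF bounded_linear_M inj_M])

lemma quadratic_expand:
  "M (c *\<^sub>R x + y) \<bullet> (c *\<^sub>R x + y) = c\<^sup>2 * (M x \<bullet> x) + 2 * c * (M x \<bullet> y) + M y \<bullet> y"
  using symmetric[of y x] linear_M
  by (simp add: linear_add linear_scale inner_add_left inner_add_right power2_eq_square algebra_simps)

lemma line_meets_ellipsoid:
  assumes inside: "M y \<bullet> y < r2" and "w \<noteq> 0"
  shows "\<exists>s. M (y + s *\<^sub>R w) \<bullet> (y + s *\<^sub>R w) = r2"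
proof -
  define f where "f s = M (s *\<^sub>R w + y) \<bullet> (s *\<^sub>R w + y)" for s
  define a where "a = M w \<bullet> w"
  define b where "b = M w \<bullet> y"
  define c where "c = M y \<bullet> y"
  have a: "a > 0" unfolding a_def using positive \<open>w \<noteq> 0\<close> by blast
  have f: "f s = s\<^sup>2 * a + 2 * s * b + c" for s
    unfolding f_def a_def b_def c_def by (rule quadratic_expand)
  define S where "S = (2 * \<bar>b\<bar> + \<bar>r2\<bar> + \<bar>c\<bar> + 1) / a + 1"
  have S: "S \<ge> 1" unfolding S_def using a by simp
  have "S * a = 2 * \<bar>b\<bar> + \<bar>r2\<bar> + \<bar>c\<bar> + 1 + a" unfolding S_def using a by (simp add: field_simps)
  then have "2 * b + S * a \<ge> \<bar>r2\<bar> + \<bar>c\<bar> + 1" using a by linarith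
  then have "S * (2 * b + S * a) \<ge> 1 * (\<bar>r2\<bar> + \<bar>c\<bar> + 1)"
    by (rule mult_mono[OF S]) (use S in auto)
  then have "f S \<ge> r2" unfolding f by (simp add: power2_eq_square algebra_simps)
  moreover have "f 0 \<le> r2" using inside unfolding f_def by simp
  moreover have "continuous_on {0..S} f" unfolding f by (intro continuous_intros)
  ultimately obtain s where "f s = r2"
    using IVT'[of f 0 r2 S] S by auto
  then show ?thesis unfolding f_def by (auto simp: add.commute)
qed

definition outside_plane :: "'a \<Rightarrow> 'a \<Rightarrow> bool" where
  "outside_plane n p \<longleftrightarrow> n \<noteq> 0 \<and> (\<forall>v. n \<bullet> v = 0 \<longrightarrow> M (p + v) \<bullet> (p + v) > r2)"

lemma outside_planeI:
  assumes "DIM('a) \<ge> 2" "n \<noteq> 0" and disjoint: "\<And>v. n \<bullet> v = 0 \<Longrightarrow> M (p + v) \<bullet> (p + v) \<noteq> r2"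
  shows "outside_plane n p"
  unfolding outside_plane_def
proof (intro conjI allI impI \<open>n \<noteq> 0\<close>)
  fix v assume v: "n \<bullet> v = 0"
  obtain w where w: "n \<bullet> w = 0" "w \<noteq> 0" using exists_nonzero_orthogonal[OF assms(1)] by blast
  show "M (p + v) \<bullet> (p + v) > r2"
  proof (rule ccontr)
    assume "\<not> ?thesis"
    then have "M (p + v) \<bullet> (p + v) < r2" using disjoint[OF v] by simp
    then obtain s where "M (p + v + s *\<^sub>R w) \<bullet> (p + v + s *\<^sub>R w) = r2"
      using line_meets_ellipsoid w(2) by blast
    moreover have "n \<bullet> (v + s *\<^sub>R w) = 0" using v w(1) by (simp add: inner_add_right)
    ultimately show False using disjoint by (metis add.assoc)
  qed
qed

text \<open>The contact point \<open>u = s a + b\<close> is the point of the ellipsoid whose tangent hyperplane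
  passes through \<open>p\<close> and whose normal \<open>M u = s (w - (w \<bullet> p / n \<bullet> p) n) + (r2 / n \<bullet> p) n\<close>
  projects to \<open>s w\<close> on \<open>n\<^sup>\<bottom>\<close>; \<open>s\<close> is the positive root of the resulting quadratic.\<close>

definition contact_a :: "'a \<Rightarrow> 'a \<Rightarrow> 'a \<Rightarrow> 'a" where
  "contact_a n p w = Minv (w - ((w \<bullet> p) / (n \<bullet> p)) *\<^sub>R n)"

definition contact_b :: "'a \<Rightarrow> 'a \<Rightarrow> 'a" where
  "contact_b n p = (r2 / (n \<bullet> p)) *\<^sub>R Minv n"

definition contact_scale :: "'a \<Rightarrow> 'a \<Rightarrow> 'a \<Rightarrow> real" where
  "contact_scale n p w = (let a = contact_a n p w; b = contact_b n p in
     positive_root (M a \<bullet> a) (M a \<bullet> b) (M b \<bullet> b - r2))"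

definition contact_point :: "'a \<Rightarrow> 'a \<Rightarrow> 'a \<Rightarrow> 'a" where
  "contact_point n p w = contact_scale n p w *\<^sub>R contact_a n p w + contact_b n p"

definition contact_regular :: "'a \<Rightarrow> 'a \<Rightarrow> 'a \<Rightarrow> bool" where
  "contact_regular n p w \<longleftrightarrow> n \<bullet> p \<noteq> 0 \<and> M (contact_a n p w) \<bullet> contact_a n p w > 0 \<and>
     M (contact_b n p) \<bullet> contact_b n p < r2"

lemma contact_point_quadratic:
  "M (s *\<^sub>R contact_a n p w + contact_b n p) \<bullet> (s *\<^sub>R contact_a n p w + contact_b n p) - r2 =
   (M (contact_a n p w) \<bullet> contact_a n p w) * s\<^sup>2 + 2 * s * (M (contact_a n p w) \<bullet> contact_b n p) +
   (M (contact_b n p) \<bullet> contact_b n p - r2)"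
  unfolding quadratic_expand by (simp add: algebra_simps)

lemma contact_scale_pos:
  assumes "contact_regular n p w"
  shows "contact_scale n p w > 0"
proof -
  let ?a = "contact_a n p w" and ?b = "contact_b n p"
  have "M ?a \<bullet> ?a > 0" "M ?b \<bullet> ?b - r2 < 0" using assms unfolding contact_regular_def by simp_all
  from positive_root_iff[OF this, where b="M ?a \<bullet> ?b" and s="contact_scale n p w"]
  show ?thesis unfolding contact_scale_def Let_def by simp
qed

lemma M_contact_a: "M (contact_a n p w) = w - ((w \<bullet> p) / (n \<bullet> p)) *\<^sub>R n"
  by (simp add: contact_a_def)

lemma M_contact_b: "M (contact_b n p) = (r2 / (n \<bullet> p)) *\<^sub>R n"
  unfolding contact_b_def using linear_M by (simp add: linear_scale)

lemma M_contact_combination: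
  "M (s *\<^sub>R contact_a n p w + contact_b n p) = s *\<^sub>R (w - ((w \<bullet> p) / (n \<bullet> p)) *\<^sub>R n) + (r2 / (n \<bullet> p)) *\<^sub>R n"
  using linear_M by (simp add: linear_add linear_scale M_contact_a M_contact_b)

lemma perp_proj_contact_combination:
  "n \<bullet> w = 0 \<Longrightarrow> perp_proj n (M (s *\<^sub>R contact_a n p w + contact_b n p)) = s *\<^sub>R w"
  unfolding M_contact_combination
  by (simp add: linear_add[OF perp_proj_linear] linear_scale[OF perp_proj_linear]
      linear_diff[OF perp_proj_linear] perp_proj_self perp_proj_id)

context
  fixes n p :: 'a
  assumes outside: "outside_plane n p"
begin

lemma outside_plane_inner_nonzero: "n \<bullet> p \<noteq> 0"
proof
  assume "n \<bullet> p = 0"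
  then have "n \<bullet> (- p) = 0" by simp
  then have "r2 < M (p + - p) \<bullet> (p + - p)" using outside unfolding outside_plane_def by blast
  then show False using r2_pos linear_0[OF linear_M] by simp
qed

lemma contact_b_inside: "M (contact_b n p) \<bullet> contact_b n p < r2"
proof -
  let ?b = "contact_b n p"
  have n: "n \<noteq> 0" using outside unfolding outside_plane_def by blast
  then have "?b \<noteq> 0"
    using M_contact_b[of n p] outside_plane_inner_nonzero r2_pos linear_0[OF linear_M] by force
  then have qb: "M ?b \<bullet> ?b > 0" by (rule positive)
  have nb: "M ?b \<bullet> ?b = (r2 / (n \<bullet> p)) * (n \<bullet> ?b)" unfolding M_contact_b by simp
  \<comment> \<open>\<open>c\<close> is where the line through \<open>0\<close> and \<open>b\<close> meets the plane \<open>p + n\<^sup>\<bottom>\<close>.\<close>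
  define c where "c = (r2 / (M ?b \<bullet> ?b)) *\<^sub>R ?b"
  have "n \<bullet> c = n \<bullet> p"
    unfolding c_def using nb qb r2_pos outside_plane_inner_nonzero by (simp add: field_simps)
  then have "n \<bullet> (c - p) = 0" by (simp add: inner_diff_right)
  then have "M c \<bullet> c > r2" using outside unfolding outside_plane_def by force
  moreover have "M c \<bullet> c = r2 * r2 / (M ?b \<bullet> ?b)"
    unfolding c_def using qb linear_M by (simp add: linear_scale power2_eq_square field_simps)
  ultimately show ?thesis using qb r2_pos by (simp add: field_simps)
qed

lemma contact_a_positive:
  assumes "n \<bullet> w = 0" "w \<noteq> 0"
  shows "M (contact_a n p w) \<bullet> contact_a n p w > 0"
proof -
  have "(w - ((w \<bullet> p) / (n \<bullet> p)) *\<^sub>R n) \<bullet> w = w \<bullet> w"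
    using assms(1) by (simp add: inner_diff_left inner_commute[of n w])
  then have "contact_a n p w \<noteq> 0"
    using assms(2) M_contact_a[of n p w] linear_0[OF linear_M] by force
  then show ?thesis by (rule positive)
qed

lemma contact_regular:
  "n \<bullet> w = 0 \<Longrightarrow> w \<noteq> 0 \<Longrightarrow> contact_regular n p w"
  unfolding contact_regular_def
  using outside_plane_inner_nonzero contact_a_positive contact_b_inside by blast

lemma contact_combination_polar:
  "M (s *\<^sub>R contact_a n p w + contact_b n p) \<bullet> p = r2"
  unfolding M_contact_combination using outside_plane_inner_nonzero
  by (simp add: inner_add_left inner_diff_left inner_commute[of n p])

lemma contact_point_props:
  assumes w: "n \<bullet> w = 0" "w \<noteq> 0"
  defines "u \<equiv> contact_point n p w" and "s \<equiv> contact_scale n p w"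
  shows "s > 0" "M u \<bullet> u = r2" "M u \<bullet> (p - u) = 0" "perp_proj n (M u) = s *\<^sub>R w"
proof -
  have "s > 0 \<and> (M (contact_a n p w) \<bullet> contact_a n p w) * s\<^sup>2 + 2 * s * (M (contact_a n p w) \<bullet> contact_b n p) +
      (M (contact_b n p) \<bullet> contact_b n p - r2) = 0"
    using contact_regular[OF w] unfolding s_def contact_scale_def contact_regular_def Let_def
    by (subst positive_root_iff) simp_all
  then show "s > 0" and u: "M u \<bullet> u = r2"
    using contact_point_quadratic[of s] unfolding u_def contact_point_def s_def by simp_all
  show "M u \<bullet> (p - u) = 0"
    using u contact_combination_polar unfolding u_def contact_point_def by (simp add: inner_diff_right)
  show "perp_proj n (M u) = s *\<^sub>R w"
    unfolding u_def contact_point_def s_def by (rule perp_proj_contact_combination[OF w(1)])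
qed

lemma perp_proj_normal_nonzero:
  assumes on: "M v \<bullet> v = r2" and polar: "M v \<bullet> (p - v) = 0"
  shows "perp_proj n (M v) \<noteq> 0"
proof
  assume "perp_proj n (M v) = 0"
  then obtain k where Mv: "M v = k *\<^sub>R n" using perp_proj_decompose[of "M v" n] by auto
  have "k * (n \<bullet> p) = r2" using on polar unfolding Mv by (simp add: inner_diff_right)
  moreover have "k * (n \<bullet> v) = r2" using on unfolding Mv by simp
  ultimately have "n \<bullet> (v - p) = 0" using r2_pos by (auto simp: inner_diff_right)
  then have "M (p + (v - p)) \<bullet> (p + (v - p)) > r2" using outside unfolding outside_plane_def by blast
  then show False using on by simp
qed

lemma contact_point_unique:
  assumes on: "M v \<bullet> v = r2" and polar: "M v \<bullet> (p - v) = 0" and t: "t > 0"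
    and w: "w = (2 * t) *\<^sub>R perp_proj n (M v)"
  shows "n \<bullet> w = 0" "w \<noteq> 0" "contact_scale n p w = 1 / (2 * t)" "contact_point n p w = v"
proof -
  show nw: "n \<bullet> w = 0" unfolding w by (simp add: perp_proj_orthogonal)
  show "w \<noteq> 0" unfolding w using perp_proj_normal_nonzero[OF on polar] t by simp
  define \<sigma> where "\<sigma> = 1 / (2 * t)"
  have \<sigma>: "\<sigma> > 0" unfolding \<sigma>_def using t by simp
  obtain k where Mv: "M v = \<sigma> *\<^sub>R w + k *\<^sub>R n"
    using perp_proj_decompose[of "M v" n] t unfolding w \<sigma>_def by auto
  have "M v \<bullet> p = r2" using on polar by (simp add: inner_diff_right)
  then have k: "k = r2 / (n \<bullet> p) - \<sigma> * (w \<bullet> p) / (n \<bullet> p)"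
    using outside_plane_inner_nonzero unfolding Mv by (simp add: inner_add_left field_simps)
  have "M v = \<sigma> *\<^sub>R w + (r2 / (n \<bullet> p) - \<sigma> * (w \<bullet> p) / (n \<bullet> p)) *\<^sub>R n"
    using Mv k by (simp only:)
  also have "\<dots> = M (\<sigma> *\<^sub>R contact_a n p w + contact_b n p)"
    unfolding M_contact_combination by (simp add: algebra_simps scaleR_diff_left)
  finally have "M v = M (\<sigma> *\<^sub>R contact_a n p w + contact_b n p)" .
  then have v: "v = \<sigma> *\<^sub>R contact_a n p w + contact_b n p" using inj_M by (simp add: inj_eq)
  have "\<sigma> > 0 \<and> (M (contact_a n p w) \<bullet> contact_a n p w) * \<sigma>\<^sup>2 +
      2 * \<sigma> * (M (contact_a n p w) \<bullet> contact_b n p) + (M (contact_b n p) \<bullet> contact_b n p - r2) = 0"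
    using \<sigma> on contact_point_quadratic[of \<sigma>] unfolding v by simp
  then have "\<sigma> = contact_scale n p w"
    using contact_regular[OF nw \<open>w \<noteq> 0\<close>] unfolding contact_scale_def contact_regular_def Let_def
    by (subst (asm) positive_root_iff) simp_all
  then show "contact_scale n p w = 1 / (2 * t)" "contact_point n p w = v"
    unfolding \<sigma>_def v contact_point_def by simp_all
qed

end

end

lemma smooth_on_open_positive_root:
  fixes a b c :: "'a::real_normed_vector \<Rightarrow> real"
  assumes "smooth_on_open U a" "smooth_on_open U b" "smooth_on_open U c"
    and sign: "\<forall>z\<in>U. a z > 0 \<and> c z < 0"
  shows "smooth_on_open U (\<lambda>z. positive_root (a z) (b z) (c z))"
proof -
  have "b z * b z - a z * c z > 0" if "z \<in> U" for z
    using sign that by (smt (verit) mult_pos_neg zero_le_square)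
  then have "smooth_on_open U (\<lambda>z. sqrt (b z * b z - a z * c z))"
    using assms(1-3) by (intro smooth_on_open_sqrt smooth_on_open_diff smooth_on_open_mult) auto
  then show ?thesis
    unfolding positive_root_def power2_eq_square using assms(1,2) sign
    by (intro smooth_on_open_divide smooth_on_open_add smooth_on_open_minus) auto
qed

context ellipsoid
begin

lemma
  fixes N P W :: "'b::real_normed_vector \<Rightarrow> 'a"
  assumes N: "smooth_on_open V N" and P: "smooth_on_open V P" and W: "smooth_on_open V W"
    and np: "\<forall>z\<in>V. N z \<bullet> P z \<noteq> 0"
  shows smooth_on_open_contact_a: "smooth_on_open V (\<lambda>z. contact_a (N z) (P z) (W z))"
    and smooth_on_open_contact_b: "smooth_on_open V (\<lambda>z. contact_b (N z) (P z))"
proof -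
  show "smooth_on_open V (\<lambda>z. contact_a (N z) (P z) (W z))"
    unfolding contact_a_def
    by (rule smooth_on_open_bounded_linear_comp[OF bounded_linear_Minv smooth_on_open_diff[OF W
        smooth_on_open_scaleR[OF smooth_on_open_divide[OF smooth_on_open_inner[OF W P] smooth_on_open_inner[OF N P] np] N]]])
  show "smooth_on_open V (\<lambda>z. contact_b (N z) (P z))"
    unfolding contact_b_def
    by (rule smooth_on_open_scaleR[OF smooth_on_open_divide[OF smooth_on_open_const[OF smooth_on_open_imp_open[OF N]]
          smooth_on_open_inner[OF N P] np] smooth_on_open_bounded_linear_comp[OF bounded_linear_Minv N]])
qed

lemma
  fixes N P W :: "'b::real_normed_vector \<Rightarrow> 'a"
  assumes N: "smooth_on_open V N" and P: "smooth_on_open V P" and W: "smooth_on_open V W"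
    and regular: "\<forall>z\<in>V. contact_regular (N z) (P z) (W z)"
  shows smooth_on_open_contact_scale: "smooth_on_open V (\<lambda>z. contact_scale (N z) (P z) (W z))"
    and smooth_on_open_contact_point: "smooth_on_open V (\<lambda>z. contact_point (N z) (P z) (W z))"
proof -
  have np: "\<forall>z\<in>V. N z \<bullet> P z \<noteq> 0" using regular by (simp add: contact_regular_def)
  note a = smooth_on_open_contact_a[OF N P W np] and b = smooth_on_open_contact_b[OF N P W np]
  note Ma = smooth_on_open_bounded_linear_comp[OF bounded_linear_M a]
  note Mb = smooth_on_open_bounded_linear_comp[OF bounded_linear_M b]
  have "smooth_on_open V (\<lambda>z. positive_root (M (contact_a (N z) (P z) (W z)) \<bullet> contact_a (N z) (P z) (W z))
      (M (contact_a (N z) (P z) (W z)) \<bullet> contact_b (N z) (P z))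
      (M (contact_b (N z) (P z)) \<bullet> contact_b (N z) (P z) - r2))"
    by (rule smooth_on_open_positive_root[OF smooth_on_open_inner[OF Ma a] smooth_on_open_inner[OF Ma b]
        smooth_on_open_diff[OF smooth_on_open_inner[OF Mb b] smooth_on_open_const]])
      (use regular smooth_on_open_imp_open[OF N] in \<open>auto simp: contact_regular_def\<close>)
  then show scale: "smooth_on_open V (\<lambda>z. contact_scale (N z) (P z) (W z))"
    unfolding contact_scale_def Let_def .
  show "smooth_on_open V (\<lambda>z. contact_point (N z) (P z) (W z))"
    unfolding contact_point_def by (rule smooth_on_open_add[OF smooth_on_open_scaleR[OF scale a] b])
qed

lemma open_contact_regular:
  fixes N P W :: "'b::real_normed_vector \<Rightarrow> 'a"
  assumes N: "smooth_on_open V N" and P: "smooth_on_open V P" and W: "smooth_on_open V W"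
  shows "open {z\<in>V. contact_regular (N z) (P z) (W z)}"
proof -
  define V' where "V' = {z\<in>V. N z \<bullet> P z \<noteq> 0}"
  have "open V'"
    using continuous_open_preimage[OF smooth_on_open_imp_continuous_on[OF smooth_on_open_inner[OF N P]]
        smooth_on_open_imp_open[OF N] open_Compl[OF closed_singleton[of 0]]]
    unfolding V'_def by (simp add: vimage_def Int_def)
  then have N': "smooth_on_open V' N" and P': "smooth_on_open V' P" and W': "smooth_on_open V' W"
    using N P W smooth_on_open_subset unfolding V'_def by blast+
  have np: "\<forall>z\<in>V'. N z \<bullet> P z \<noteq> 0" unfolding V'_def by blast
  define coeffs where "coeffs z = (M (contact_a (N z) (P z) (W z)) \<bullet> contact_a (N z) (P z) (W z),
      M (contact_b (N z) (P z)) \<bullet> contact_b (N z) (P z))" for z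
  have "smooth_on_open V' coeffs"
    unfolding coeffs_def
    using smooth_on_open_contact_a[OF N' P' W' np] smooth_on_open_contact_b[OF N' P' W' np]
    by (intro smooth_on_open_Pair smooth_on_open_inner smooth_on_open_bounded_linear_comp[OF bounded_linear_M])
  then have "open (V' \<inter> coeffs -` ({0<..} \<times> {..<r2}))"
    by (intro continuous_open_preimage smooth_on_open_imp_continuous_on \<open>open V'\<close>
        open_Times open_greaterThan open_lessThan)
  moreover have "{z\<in>V. contact_regular (N z) (P z) (W z)} = V' \<inter> coeffs -` ({0<..} \<times> {..<r2})"
    unfolding V'_def coeffs_def contact_regular_def by auto
  ultimately show ?thesis by simp
qed

end

section \<open>The polar map of a hypersurface\<close>

definition grad :: "('a::euclidean_space \<Rightarrow> real) \<Rightarrow> 'a \<Rightarrow> 'a" where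
  "grad g y = (\<Sum>i\<in>Basis. frechet_derivative g (at y) i *\<^sub>R i)"

lemma frechet_derivative_eq_grad_inner:
  "g differentiable (at y) \<Longrightarrow> frechet_derivative g (at y) v = grad g y \<bullet> v"
  unfolding grad_def
  by (rule linear_functional_inner) (meson frechet_derivative_works has_derivative_linear)

lemma grad_nonzero:
  "g differentiable (at y) \<Longrightarrow> frechet_derivative g (at y) \<noteq> (\<lambda>v. 0) \<Longrightarrow> grad g y \<noteq> 0"
  using frechet_derivative_eq_grad_inner[of g y] by auto

lemma smooth_on_open_grad:
  fixes g :: "'a::euclidean_space \<Rightarrow> real"
  assumes "smooth_on_open U g"
  shows "smooth_on_open U (grad g)"
  unfolding grad_def[abs_def]
  by (intro smooth_on_open_sum finite_Basis smooth_on_open_imp_open[OF assms]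
      smooth_on_open_scaleR[OF smooth_on_open_frechet_derivative[OF assms]] smooth_on_open_const)

lemma tangent_space_chart:
  fixes g :: "'a::euclidean_space \<Rightarrow> real"
  assumes U: "open U" and g: "smooth_on_open U g" and XU: "X \<inter> U = {y\<in>U. g y = 0}"
    and regular: "\<forall>y\<in>U. frechet_derivative g (at y) \<noteq> (\<lambda>v. 0)" and y: "y \<in> U" "y \<in> X"
  shows "tangent_space X y = {v. grad g y \<bullet> v = 0}" and "grad g y \<noteq> 0"
proof -
  have dg: "(g has_derivative frechet_derivative g (at y)) (at y)"
    by (rule smooth_on_open_has_derivative[OF g y(1)])
  then have grad: "frechet_derivative g (at y) = (\<lambda>v. grad g y \<bullet> v)"
    using frechet_derivative_eq_grad_inner differentiableI by blast
  have "frechet_derivative g (at y) \<noteq> (\<lambda>v. 0)" using regular y(1) by blast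
  then show "tangent_space X y = {v. grad g y \<bullet> v = 0}"
    using tangent_space_level_set[OF U y(1) XU y(2) dg smooth_on_open_imp_continuous_on[OF g]]
    unfolding grad by blast
  show "grad g y \<noteq> 0"
    using grad_nonzero differentiableI[OF dg] \<open>frechet_derivative g (at y) \<noteq> (\<lambda>v. 0)\<close> by blast
qed

lemma smooth_on_open_perp_proj:
  fixes n y :: "'a::real_normed_vector \<Rightarrow> 'b::euclidean_space"
  assumes "smooth_on_open U n" "smooth_on_open U y" "\<forall>z\<in>U. n z \<noteq> 0"
  shows "smooth_on_open U (\<lambda>z. perp_proj (n z) (y z))"
  unfolding perp_proj_def
  by (rule smooth_on_open_diff[OF assms(2) smooth_on_open_scaleR[OF smooth_on_open_divide[OF
        smooth_on_open_inner[OF assms(2,1)] smooth_on_open_inner[OF assms(1,1)]] assms(1)]])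
    (use assms(3) in simp)

locale ellipsoid_hypersurface = ellipsoid M r2 for M :: "'a::euclidean_space \<Rightarrow> 'a" and r2 +
  fixes X :: "'a set" and e :: 'a
  assumes hypersurface: "smooth_hypersurface X" and dim: "DIM('a) \<ge> 2"
    and tangent_lines_miss:
      "\<And>x v s. x \<in> X \<Longrightarrow> v \<in> tangent_space X x \<Longrightarrow> v \<noteq> 0 \<Longrightarrow>
         M (x + s *\<^sub>R v - e) \<bullet> (x + s *\<^sub>R v - e) \<noteq> r2"
begin

text \<open>\<open>contacts\<close> and \<open>polar_map\<close> are \<open>Z \<times> \<real>\<^sub>+\<close> and \<open>D\<close>, with \<open>\<Phi>(x,\<sigma>) = 2 M(\<sigma> - e) \<bullet> (x - \<sigma>)\<close>
  and \<open>r2 = 1 - q(e)\<close>.\<close>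

definition contacts :: "(('a \<times> 'a) \<times> real) set" where
  "contacts = {((x, \<sigma>), t). x \<in> X \<and> M (\<sigma> - e) \<bullet> (\<sigma> - e) = r2 \<and> M (\<sigma> - e) \<bullet> (x - \<sigma>) = 0 \<and> t > 0}"

definition polar_map :: "('a \<times> 'a) \<times> real \<Rightarrow> 'a \<times> 'a" where
  "polar_map = (\<lambda>((x, \<sigma>), t). (x, covector_rep X x (\<lambda>v. t * (2 * (M (\<sigma> - e) \<bullet> v)))))"

lemma hypersurface_chart:
  assumes "x \<in> X"
  obtains U and g :: "'a \<Rightarrow> real" where "open U" "x \<in> U" "smooth_on_open U g" "X \<inter> U = {y\<in>U. g y = 0}"
    "\<forall>y\<in>U. frechet_derivative g (at y) \<noteq> (\<lambda>v. 0)"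
  using hypersurface assms that unfolding smooth_hypersurface_def by meson

lemma tangent_space_hyperplane:
  assumes "x \<in> X"
  obtains n where "n \<noteq> 0" "tangent_space X x = {v. n \<bullet> v = 0}"
proof -
  obtain U and g :: "'a \<Rightarrow> real" where U: "open U" "x \<in> U" "smooth_on_open U g" "X \<inter> U = {y\<in>U. g y = 0}"
    "\<forall>y\<in>U. frechet_derivative g (at y) \<noteq> (\<lambda>v. 0)"
    using hypersurface_chart[OF assms] .
  show ?thesis by (rule that[OF tangent_space_chart(2,1)[OF U(1,3,4,5,2) assms]])
qed

lemma outside_plane_tangent:
  assumes x: "x \<in> X" and n: "n \<noteq> 0" and T: "tangent_space X x = {v. n \<bullet> v = 0}"
  shows "outside_plane n (x - e)"
proof (rule outside_planeI[OF dim n])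
  fix v assume v: "n \<bullet> v = 0"
  show "M (x - e + v) \<bullet> (x - e + v) \<noteq> r2"
  proof (cases "v = 0")
    case True
    obtain w where "n \<bullet> w = 0" "w \<noteq> 0" using exists_nonzero_orthogonal[OF dim] by blast
    then show ?thesis using tangent_lines_miss[OF x, of w 0] True T by simp
  next
    case False
    then show ?thesis using tangent_lines_miss[OF x, of v 1] v T by (simp add: algebra_simps)
  qed
qed

lemma polar_map_eq:
  assumes "tangent_space X x = {v. n \<bullet> v = 0}"
  shows "polar_map ((x, \<sigma>), t) = (x, (2 * t) *\<^sub>R perp_proj n (M (\<sigma> - e)))"
  unfolding polar_map_def
  using covector_rep_hyperplane[OF assms, of _ "(2 * t) *\<^sub>R M (\<sigma> - e)"]
  by (simp add: linear_scale[OF perp_proj_linear])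

lemma dxPhi_nonvanishing:
  assumes x: "x \<in> X" and on: "M (\<sigma> - e) \<bullet> (\<sigma> - e) = r2" and polar: "M (\<sigma> - e) \<bullet> (x - \<sigma>) = 0"
  shows "\<exists>v\<in>tangent_space X x. 2 * (M (\<sigma> - e) \<bullet> v) \<noteq> 0"
proof -
  obtain n where n: "n \<noteq> 0" and T: "tangent_space X x = {v. n \<bullet> v = 0}"
    using tangent_space_hyperplane[OF x] .
  define v where "v = perp_proj n (M (\<sigma> - e))"
  have "v \<noteq> 0"
    using perp_proj_normal_nonzero[OF outside_plane_tangent[OF x n T] on] polar
    unfolding v_def by (simp add: algebra_simps)
  moreover have "M (\<sigma> - e) \<bullet> v = v \<bullet> v"
    using perp_proj_inner[OF perp_proj_orthogonal, of n "M (\<sigma> - e)"] unfolding v_def by (simp add: inner_commute)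
  ultimately show ?thesis
    unfolding T by (intro bexI[of _ v]) (simp_all add: v_def perp_proj_orthogonal)
qed

definition contact_inverse :: "'a \<Rightarrow> 'a \<times> 'a \<Rightarrow> ('a \<times> 'a) \<times> real" where
  "contact_inverse n z = ((fst z, e + contact_point n (fst z - e) (snd z)),
     1 / (2 * contact_scale n (fst z - e) (snd z)))"

lemma polar_map_contact_inverse:
  assumes x: "x \<in> X" and n: "n \<noteq> 0" and T: "tangent_space X x = {v. n \<bullet> v = 0}"
    and w: "n \<bullet> w = 0" "w \<noteq> 0"
  shows "contact_inverse n (x, w) \<in> contacts" and "polar_map (contact_inverse n (x, w)) = (x, w)"
proof -
  note props = contact_point_props[OF outside_plane_tangent[OF x n T] w]
  show "contact_inverse n (x, w) \<in> contacts"
    using x props(1-3) unfolding contact_inverse_def contacts_def by (simp add: algebra_simps)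
  show "polar_map (contact_inverse n (x, w)) = (x, w)"
    using props(1,4) unfolding contact_inverse_def by (simp add: polar_map_eq[OF T])
qed

lemma smooth_on_open_contact_inverse:
  assumes N: "smooth_on_open V N" and regular: "\<forall>z\<in>V. contact_regular (N z) (fst z - e) (snd z)"
  shows "smooth_on_open V (\<lambda>z. contact_inverse (N z) z)"
proof -
  have V: "open V" by (rule smooth_on_open_imp_open[OF N])
  have P: "smooth_on_open V (\<lambda>z. fst z - e)" and W: "smooth_on_open V snd"
    by (intro smooth_on_open_diff smooth_on_open_const smooth_on_open_bounded_linear bounded_linear_fst
        bounded_linear_snd V)+
  note scale = smooth_on_open_contact_scale[OF N P W regular]
    and point = smooth_on_open_contact_point[OF N P W regular]
  show ?thesis
    unfolding contact_inverse_def
    by (rule smooth_on_open_Pair[OF smooth_on_open_Pair[OF smooth_on_open_bounded_linear[OF V bounded_linear_fst]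
          smooth_on_open_add[OF smooth_on_open_const[OF V] point]]
          smooth_on_open_divide[OF smooth_on_open_const[OF V] smooth_on_open_mult[OF smooth_on_open_const[OF V] scale]]])
      (use regular contact_scale_pos in fastforce)
qed

lemma polar_map_inj: "inj_on polar_map contacts"
proof (rule inj_onI)
  fix z z' assume "z \<in> contacts" "z' \<in> contacts" and eq: "polar_map z = polar_map z'"
  then obtain x \<sigma> t x' \<sigma>' t' where z: "z = ((x, \<sigma>), t)" "z' = ((x', \<sigma>'), t')" and x: "x \<in> X"
    and on: "M (\<sigma> - e) \<bullet> (\<sigma> - e) = r2" "M (\<sigma>' - e) \<bullet> (\<sigma>' - e) = r2"
    and polar: "M (\<sigma> - e) \<bullet> (x - \<sigma>) = 0" "M (\<sigma>' - e) \<bullet> (x' - \<sigma>') = 0" and t: "t > 0" "t' > 0"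
    unfolding contacts_def by blast
  have "x' = x" using eq unfolding z polar_map_def by simp
  obtain n where n: "n \<noteq> 0" and T: "tangent_space X x = {v. n \<bullet> v = 0}"
    using tangent_space_hyperplane[OF x] .
  define w where "w = (2 * t) *\<^sub>R perp_proj n (M (\<sigma> - e))"
  have w': "w = (2 * t') *\<^sub>R perp_proj n (M (\<sigma>' - e))"
    using eq unfolding z w_def \<open>x' = x\<close> polar_map_eq[OF T] by simp
  note outside = outside_plane_tangent[OF x n T]
  note u = contact_point_unique[OF outside on(1) _ t(1) w_def]
    and u' = contact_point_unique[OF outside on(2) _ t(2) w']
  have "t = t'" "\<sigma> = \<sigma>'"
    using u(3,4) u'(3,4) polar t \<open>x' = x\<close> by (simp_all add: algebra_simps)
  then show "z = z'" unfolding z \<open>x' = x\<close> by simp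
qed

lemma polar_map_bij: "bij_betw polar_map contacts (cotangent_bundle_minus_zero X)"
proof (rule bij_betw_imageI[OF polar_map_inj])
  show "polar_map ` contacts = cotangent_bundle_minus_zero X"
  proof (intro equalityI subsetI)
    fix y assume "y \<in> polar_map ` contacts"
    then obtain x \<sigma> t where y: "y = polar_map ((x, \<sigma>), t)" and x: "x \<in> X"
      and on: "M (\<sigma> - e) \<bullet> (\<sigma> - e) = r2" and polar: "M (\<sigma> - e) \<bullet> (x - \<sigma>) = 0" and t: "t > 0"
      unfolding contacts_def by blast
    obtain n where n: "n \<noteq> 0" and T: "tangent_space X x = {v. n \<bullet> v = 0}"
      using tangent_space_hyperplane[OF x] .
    have "M (\<sigma> - e) \<bullet> ((x - e) - (\<sigma> - e)) = 0" using polar by simp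
    note u = contact_point_unique[OF outside_plane_tangent[OF x n T] on this t refl]
    show "y \<in> cotangent_bundle_minus_zero X"
      using x u(1,2) unfolding y polar_map_eq[OF T] cotangent_bundle_minus_zero_def by (simp add: T)
  next
    fix y assume "y \<in> cotangent_bundle_minus_zero X"
    then obtain x w where y: "y = (x, w)" and x: "x \<in> X" and w: "w \<in> tangent_space X x" "w \<noteq> 0"
      unfolding cotangent_bundle_minus_zero_def by blast
    obtain n where n: "n \<noteq> 0" and T: "tangent_space X x = {v. n \<bullet> v = 0}"
      using tangent_space_hyperplane[OF x] .
    have "n \<bullet> w = 0" using w(1) T by simp
    from polar_map_contact_inverse[OF x n T this w(2)] show "y \<in> polar_map ` contacts"
      unfolding y by (metis image_eqI)
  qed
qed

lemma polar_map_smooth: "smooth_on_set contacts polar_map"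
  unfolding smooth_on_set_def
proof
  fix z assume "z \<in> contacts"
  then obtain x \<sigma> t where z: "z = ((x, \<sigma>), t)" and x: "x \<in> X" unfolding contacts_def by blast
  obtain U and g :: "'a \<Rightarrow> real" where U: "open U" "x \<in> U" "smooth_on_open U g"
    "X \<inter> U = {y\<in>U. g y = 0}" "\<forall>y\<in>U. frechet_derivative g (at y) \<noteq> (\<lambda>v. 0)"
    using hypersurface_chart[OF x] .
  let ?x = "\<lambda>z::('a \<times> 'a) \<times> real. fst (fst z)" and ?\<sigma> = "\<lambda>z::('a \<times> 'a) \<times> real. snd (fst z)"
  have lin_x: "bounded_linear ?x" and lin_\<sigma>: "bounded_linear ?\<sigma>"
    by (simp_all add: bounded_linear_compose[OF bounded_linear_fst bounded_linear_fst]
        bounded_linear_compose[OF bounded_linear_snd bounded_linear_fst])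
  define V where "V = ?x -` U"
  have N: "smooth_on_open V (\<lambda>z. grad g (?x z))"
    unfolding V_def by (rule smooth_on_open_comp_bounded_linear[OF lin_x smooth_on_open_grad[OF U(3)]])
  have V: "open V" by (rule smooth_on_open_imp_open[OF N])
  have N0: "\<forall>z\<in>V. grad g (?x z) \<noteq> 0"
    unfolding V_def using grad_nonzero differentiableI[OF smooth_on_open_has_derivative[OF U(3)]] U(5) by auto
  define F where "F z = (?x z, (2 * snd z) *\<^sub>R perp_proj (grad g (?x z)) (M (?\<sigma> z - e)))" for z
  have "smooth_on_open V F"
    unfolding F_def
    by (intro smooth_on_open_Pair smooth_on_open_bounded_linear V lin_x
        smooth_on_open_scaleR smooth_on_open_perp_proj N N0
        smooth_on_open_bounded_linear_comp[OF bounded_linear_M] smooth_on_open_diff smooth_on_open_const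
        bounded_linear_compose[OF bounded_linear_mult_right bounded_linear_snd] lin_\<sigma>)
  moreover have "F y = polar_map y" if "y \<in> contacts \<inter> V" for y
  proof -
    obtain x' \<sigma>' t' where y: "y = ((x', \<sigma>'), t')" by (metis surj_pair)
    moreover have "x' \<in> U" "x' \<in> X" using that unfolding y contacts_def V_def by auto
    ultimately show ?thesis
      unfolding y F_def polar_map_eq[OF tangent_space_chart(1)[OF U(1,3,4,5) \<open>x' \<in> U\<close> \<open>x' \<in> X\<close>]] by simp
  qed
  moreover have "z \<in> V" unfolding V_def z using U(2) by simp
  ultimately show "\<exists>V F. open V \<and> z \<in> V \<and> smooth_on_open V F \<and> (\<forall>y\<in>contacts \<inter> V. F y = polar_map y)"
    using V by blast
qed

lemma polar_map_inv_smooth: "smooth_on_set (cotangent_bundle_minus_zero X) (inv_into contacts polar_map)"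
  unfolding smooth_on_set_def
proof
  fix z0 assume "z0 \<in> cotangent_bundle_minus_zero X"
  then obtain x0 w0 where z0: "z0 = (x0, w0)" and x0: "x0 \<in> X"
    and w0: "w0 \<in> tangent_space X x0" "w0 \<noteq> 0"
    unfolding cotangent_bundle_minus_zero_def by blast
  obtain U and g :: "'a \<Rightarrow> real" where U: "open U" "x0 \<in> U" "smooth_on_open U g"
    "X \<inter> U = {y\<in>U. g y = 0}" "\<forall>y\<in>U. frechet_derivative g (at y) \<noteq> (\<lambda>v. 0)"
    using hypersurface_chart[OF x0] .
  define V0 :: "('a \<times> 'a) set" where "V0 = fst -` U"
  define N where "N z = grad g (fst z)" for z :: "'a \<times> 'a"
  have N: "smooth_on_open V0 N"
    unfolding N_def V0_def by (rule smooth_on_open_comp_bounded_linear[OF bounded_linear_fst smooth_on_open_grad[OF U(3)]])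
  then have "open V0" by (rule smooth_on_open_imp_open)
  define V where "V = {z\<in>V0. contact_regular (N z) (fst z - e) (snd z)}"
  have V: "open V" unfolding V_def
    by (rule open_contact_regular[OF N]) (intro smooth_on_open_diff smooth_on_open_const
        smooth_on_open_bounded_linear bounded_linear_fst bounded_linear_snd \<open>open V0\<close>)+
  have "smooth_on_open V (\<lambda>z. contact_inverse (N z) z)"
    by (rule smooth_on_open_contact_inverse[OF smooth_on_open_subset[OF N V]]) (auto simp: V_def)
  moreover have "contact_inverse (N z) z = inv_into contacts polar_map z"
    if zV: "z \<in> cotangent_bundle_minus_zero X \<inter> V" for z
  proof -
    obtain x w where z: "z = (x, w)" and x: "x \<in> X" and w: "w \<in> tangent_space X x" "w \<noteq> 0"
      using zV unfolding cotangent_bundle_minus_zero_def by blast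
    have "x \<in> U" using zV unfolding z V_def V0_def by simp
    note T = tangent_space_chart[OF U(1,3,4,5) \<open>x \<in> U\<close> x]
    have "grad g x \<bullet> w = 0" using w(1) T(1) by simp
    from inv_into_f_eq[OF polar_map_inj polar_map_contact_inverse[OF x T(2,1) this w(2)]]
    show ?thesis unfolding z N_def by simp
  qed
  moreover have "z0 \<in> V"
  proof -
    note T = tangent_space_chart[OF U(1,3,4,5,2) x0]
    have "grad g x0 \<bullet> w0 = 0" using w0(1) T(1) by simp
    then show ?thesis
      using contact_regular[OF outside_plane_tangent[OF x0 T(2,1)] _ w0(2)] U(2)
      unfolding V_def V0_def z0 N_def by simp
  qed
  ultimately show "\<exists>V F. open V \<and> z0 \<in> V \<and> smooth_on_open V F \<and>
      (\<forall>z\<in>cotangent_bundle_minus_zero X \<inter> V. F z = inv_into contacts polar_map z)"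
    using V by blast
qed

end

lemma quadratic_form_self_adjoint:
  fixes Q :: "'a::euclidean_space \<Rightarrow> real"
  assumes "quadratic_form Q"
  obtains M where "linear M" "\<And>u v. M u \<bullet> v = M v \<bullet> u" "\<And>v. Q v = M v \<bullet> v"
proof -
  obtain B where B: "bilinear B" "\<And>u v. B u v = B v u" "\<And>v. Q v = B v v"
    using assms unfolding quadratic_form_def by blast
  define M where "M u = (\<Sum>j\<in>Basis. B u j *\<^sub>R j)" for u
  have B_M: "B u v = M u \<bullet> v" for u v
    unfolding M_def using B(1) by (intro linear_functional_inner) (simp add: bilinear_def)
  have lin: "linear (\<lambda>u. B u v)" for v using B(1) by (simp add: bilinear_def)
  have "linear M"
  proof (rule linearI)
    show "M (x + y) = M x + M y" for x y
      unfolding M_def by (simp add: linear_add[OF lin] scaleR_add_left sum.distrib)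
    show "M (r *\<^sub>R x) = r *\<^sub>R M x" for r x
      unfolding M_def by (simp add: linear_scale[OF lin] scaleR_sum_right)
  qed
  moreover have "M u \<bullet> v = M v \<bullet> u" "Q v = M v \<bullet> v" for u v using B(2,3) unfolding B_M by simp_all
  ultimately show ?thesis by (rule that)
qed

lemma has_derivative_quadratic_form:
  fixes M :: "'a::real_inner \<Rightarrow> 'a"
  assumes "bounded_linear M" "\<And>u v. M u \<bullet> v = M v \<bullet> u"
  shows "((\<lambda>\<sigma>. c + M (\<sigma> - e) \<bullet> (\<sigma> - e)) has_derivative (\<lambda>h. 2 * (M (\<sigma> - e) \<bullet> h))) (at \<sigma>)"
proof -
  have shift: "((\<lambda>\<sigma>. \<sigma> - e) has_derivative (\<lambda>h. h)) (at \<sigma>)"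
    using has_derivative_diff[OF has_derivative_ident has_derivative_const] by simp
  have "((\<lambda>\<sigma>. c + M (\<sigma> - e) \<bullet> (\<sigma> - e)) has_derivative (\<lambda>h. 0 + (M (\<sigma> - e) \<bullet> h + M h \<bullet> (\<sigma> - e)))) (at \<sigma>)"
    by (rule has_derivative_add[OF has_derivative_const
          has_derivative_inner[OF bounded_linear.has_derivative[OF assms(1) shift] shift]])
  then show ?thesis
    by (rule has_derivative_eq_rhs) (simp add: assms(2)[of _ "\<sigma> - e"] fun_eq_iff)
qed

theorem lemma3:
  fixes X :: "'a::euclidean_space set"
    and Q :: "'a \<Rightarrow> real" and e :: 'a and c :: real
    and q :: "'a \<Rightarrow> real" and Sigma :: "'a set"
    and Phi :: "'a \<Rightarrow> 'a \<Rightarrow> real" and dxPhi :: "'a \<Rightarrow> 'a \<Rightarrow> 'a \<Rightarrow> real"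
    and Z :: "('a \<times> 'a) set"
    and D :: "('a \<times> 'a) \<times> real \<Rightarrow> 'a \<times> 'a"
  assumes dim: "DIM('a) \<ge> 3"
    and hyp: "smooth_hypersurface X"
    and Q: "quadratic_form Q" "pos_def Q"
    and q_def: "q = (\<lambda>\<sigma>. c + Q (\<sigma> - e))"
    and center: "q e < 1"
    and Sigma_def: "Sigma = {\<sigma>. q \<sigma> = 1}"
    and secant: "\<And>x y s. x \<in> X \<Longrightarrow> y \<in> X \<Longrightarrow> x \<noteq> y \<Longrightarrow> x + s *\<^sub>R (y - x) \<notin> Sigma"
    and tangent: "\<And>x v s. x \<in> X \<Longrightarrow> v \<in> tangent_space X x \<Longrightarrow> v \<noteq> 0 \<Longrightarrow> x + s *\<^sub>R v \<notin> Sigma"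
    and Phi_def: "Phi = (\<lambda>x \<sigma>. frechet_derivative q (at \<sigma>) (x - \<sigma>))"
    and Z_def: "Z = {(x, \<sigma>). x \<in> X \<and> \<sigma> \<in> Sigma \<and> Phi x \<sigma> = 0}"
    and dxPhi_def: "dxPhi = (\<lambda>x \<sigma>. frechet_derivative (\<lambda>y. Phi y \<sigma>) (at x))"
    and D_def: "D = (\<lambda>((x, \<sigma>), t). (x, covector_rep X x (\<lambda>v. t * dxPhi x \<sigma> v)))"
  shows "(\<forall>(x, \<sigma>)\<in>Z. \<exists>v\<in>tangent_space X x. dxPhi x \<sigma> v \<noteq> 0)
       \<and> diffeomorphism_sets {(z, t). z \<in> Z \<and> t > 0} (cotangent_bundle_minus_zero X) D"
proof -
  obtain M where M: "linear M" "\<And>u v. M u \<bullet> v = M v \<bullet> u" and QM: "\<And>v. Q v = M v \<bullet> v"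
    using quadratic_form_self_adjoint[OF Q(1)] by blast
  have q: "q \<sigma> = c + M (\<sigma> - e) \<bullet> (\<sigma> - e)" for \<sigma> unfolding q_def QM ..
  have "c < 1" using center linear_0[OF M(1)] unfolding q by simp
  have pos: "M u \<bullet> u > 0" if "u \<noteq> 0" for u using Q(2) that unfolding pos_def_def QM by blast
  have miss: "M (x + s *\<^sub>R v - e) \<bullet> (x + s *\<^sub>R v - e) \<noteq> 1 - c"
    if "x \<in> X" "v \<in> tangent_space X x" "v \<noteq> 0" for x v s
    using tangent[OF that, of s] unfolding Sigma_def q by auto
  interpret ellipsoid_hypersurface M "1 - c" X e
    by (intro ellipsoid_hypersurface.intro ellipsoid.intro ellipsoid_hypersurface_axioms.intro M pos hyp miss)
      (use dim \<open>c < 1\<close> in auto)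
  have Phi: "Phi x \<sigma> = 2 * (M (\<sigma> - e) \<bullet> (x - \<sigma>))" for x \<sigma>
    unfolding Phi_def q[abs_def]
    using frechet_derivative_at[OF has_derivative_quadratic_form[OF bounded_linear_M M(2)]] by simp
  have dxPhi: "dxPhi x \<sigma> = (\<lambda>v. 2 * (M (\<sigma> - e) \<bullet> v))" for x \<sigma>
    unfolding dxPhi_def Phi
    by (rule frechet_derivative_at[symmetric]) (auto intro!: derivative_eq_intros)
  have "{(z, t). z \<in> Z \<and> t > 0} = contacts"
    unfolding contacts_def Z_def Sigma_def q Phi by auto
  moreover have "D = polar_map" unfolding D_def polar_map_def dxPhi ..
  ultimately show ?thesis
    unfolding diffeomorphism_sets_def
    using dxPhi_nonvanishing polar_map_bij polar_map_smooth polar_map_inv_smooth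
    by (auto simp: Z_def Sigma_def q Phi dxPhi)
qed

end
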